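(* Let $\alpha\in(0,1)$ be irrational, and let $A_n,B_n,C_n$ be as defined in the context, so that $P_{q_n}(\alpha)=A_nB_nC_n$. Let $(\tau_n)_{n\in\mathbb N}$ and $(\kappa_n)_{n\in\mathbb N}$ be eventually increasing sequences of natural numbers with $\tau_n,\kappa_n=O(q_n^{1/2})$. Then for all sufficiently large $n$, $$A_n=2\pi c_n\big(1+O(\Lambda_n^2)\big),$$ $$\log(B_n)=-2\pi^2\frac{c_n}{q_n^2}\sum_{t=1}^{M_n-1}\frac{D_t(\alpha_n^-)}{\sin(\pi t/q_n)\sin(\pi(t+1)/q_n)}-2\sum_{t=1}^{\tau_n}\sum_{j=2}^{\tau_n}\frac1j\Big(\frac{c_n\xi_{nt}}{t}\Big)^j+O(\tau_n^{-1}),$$ $$C_n=\prod_{t=1}^{\kappa_n}\Big(1-\frac1{4(t/c_n-\xi_{nt})^2}\Big)+O(\kappa_n^{-1}).$$ Here $M_n=\lfloor(q_n-1)/2\rfloor$, and $\xi_{nt}=\{tq_{n-1}/q_n\}-\frac12$ for $t\in\{0,\ldots,q_n-1\}$.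
   Context: Continued fraction and convergent notation: - $\alpha=[0;a_1,a_2,\ldots]$. - $q_0=0$, $q_1=1$, $q_{n+1}=a_nq_n+q_{n-1}$, and $p_0=1$, $p_1=0$, $p_{n+1}=a_np_n+p_{n-1}$. - $\Lambda_n=q_n\alpha-p_n$. - $\alpha_n^+=[a_n;a_{n+1},\ldots]$ and $\alpha_n^-=[0;a_{n-1},\ldots,a_1]=q_{n-1}/q_n$. - $c_n=1/(\alpha_n^++\alpha_n^-)$. - $D_t(\beta)=\sum_{s=1}^t(\{\beta s\}-\frac12)$. The three factors: - $P_N(\alpha)=\prod_{r=1}^N|2\sin(\pi r\alpha)|$. - $s_{nt}=2\sin\big(\pi[t/q_n-|\Lambda_n|(\{tq_{n-1}/q_n\}-\frac12)]\big)$. - $A_n=|2q_n\sin(\pi\Lambda_n)|$. - $B_n=\big|\prod_{t=1}^{q_n-1}\frac{s_{nt}}{2\sin(\pi t/q_n)}\big|$. - $C_n=\prod_{t=1}^{q_n-1}\big(1-s_{n0}^2/s_{nt}^2\big)^{1/2}$. The $O$-terms have constants independent of $n$. *)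

theory Defs
  imports Complex_Main "HOL-Library.Landau_Symbols"
begin

fun cf_rem :: "real \<Rightarrow> nat \<Rightarrow> real" where
  "cf_rem x 0 = x"
| "cf_rem x (Suc k) = frac (1 / cf_rem x k)"

definition cf_a :: "real \<Rightarrow> nat \<Rightarrow> nat" where
  "cf_a x k = (if k = 0 then 0 else nat \<lfloor>1 / cf_rem x (k - 1)\<rfloor>)"

text \<open>Paper's indexing: q_0 = 0, q_1 = 1, q_(n+1) = a_n q_n + q_(n-1);
  p_0 = 1, p_1 = 0, p_(n+1) = a_n p_n + p_(n-1).\<close>
fun cf_q :: "real \<Rightarrow> nat \<Rightarrow> nat" where
  "cf_q x 0 = 0"
| "cf_q x (Suc 0) = 1"
| "cf_q x (Suc (Suc n)) = cf_a x (Suc n) * cf_q x (Suc n) + cf_q x n"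

fun cf_p :: "real \<Rightarrow> nat \<Rightarrow> nat" where
  "cf_p x 0 = 1"
| "cf_p x (Suc 0) = 0"
| "cf_p x (Suc (Suc n)) = cf_a x (Suc n) * cf_p x (Suc n) + cf_p x n"

definition Lam :: "real \<Rightarrow> nat \<Rightarrow> real" where
  "Lam x n = real (cf_q x n) * x - real (cf_p x n)"

text \<open>alpha_n^+ = [a_n; a_(n+1), ...], the n-th complete quotient 1 / r_(n-1) (n >= 1).\<close>
definition alpha_plus :: "real \<Rightarrow> nat \<Rightarrow> real" where
  "alpha_plus x n = 1 / cf_rem x (n - 1)"

text \<open>alpha_n^- = [0; a_(n-1), ..., a_1] = q_(n-1) / q_n.\<close>
definition alpha_minus :: "real \<Rightarrow> nat \<Rightarrow> real" where
  "alpha_minus x n = real (cf_q x (n - 1)) / real (cf_q x n)"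

definition cc :: "real \<Rightarrow> nat \<Rightarrow> real" where
  "cc x n = 1 / (alpha_plus x n + alpha_minus x n)"

definition Dsum :: "nat \<Rightarrow> real \<Rightarrow> real" where
  "Dsum t \<beta> = (\<Sum>s = 1..t. frac (\<beta> * real s) - 1 / 2)"

definition xi :: "real \<Rightarrow> nat \<Rightarrow> nat \<Rightarrow> real" where
  "xi x n t = frac (real t * real (cf_q x (n - 1)) / real (cf_q x n)) - 1 / 2"

definition s_nt :: "real \<Rightarrow> nat \<Rightarrow> nat \<Rightarrow> real" where
  "s_nt x n t = 2 * sin (pi * (real t / real (cf_q x n) - \<bar>Lam x n\<bar> * xi x n t))"

definition A_n :: "real \<Rightarrow> nat \<Rightarrow> real" where
  "A_n x n = \<bar>2 * real (cf_q x n) * sin (pi * Lam x n)\<bar>"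

definition B_n :: "real \<Rightarrow> nat \<Rightarrow> real" where
  "B_n x n = \<bar>\<Prod>t = 1..cf_q x n - 1. s_nt x n t / (2 * sin (pi * real t / real (cf_q x n)))\<bar>"

definition C_n :: "real \<Rightarrow> nat \<Rightarrow> real" where
  "C_n x n = (\<Prod>t = 1..cf_q x n - 1. sqrt (1 - (s_nt x n 0)\<^sup>2 / (s_nt x n t)\<^sup>2))"

definition M_n :: "real \<Rightarrow> nat \<Rightarrow> nat" where
  "M_n x n = (cf_q x n - 1) div 2"

end

theory Submission
  imports Defs
begin

(* Write c = c_n and q = q_n. Since |Lambda_n| = c/q, the angle in s_nt is
   phi_t = theta_t - eps_t with theta_t = pi t/q and eps_t = pi c xi_t/q = O(1/q),
   and A_n/(2 pi c) is just |sin (pi Lambda_n)/(pi Lambda_n)|.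
   As q_(n-1) is a unit mod q, xi_t is odd under t -> q - t, so B_n and C_n are squares
   of products over t <= M_n.  For B_n, sin phi_t / sin theta_t = cos eps_t - sin eps_t cot theta_t,
   and eps_t cot theta_t = c xi_t/t + O(t/q^2): for t <= tau the logarithm of this factor is
   expanded to order tau, producing the double sum, and for tau < t <= M_n it is
   -eps_t cot theta_t + O(1/t^2).  Summation by parts turns the linear terms eps_t cot theta_t,
   summed over all t <= M_n, into the sum of the partial sums D_t against
   1/(sin theta_t sin theta_(t+1)).  For C_n, the factors with t > kappa are 1 - O(1/t^2),
   and for t <= kappa replacing sin phi_0 / sin phi_t by phi_0/phi_t = 1/(2 (t/c - xi_t))
   costs O(1/q^2) each.  Finally tau, kappa = O(q^(1/2)) turns the accumulated errors
   O(tau^2/q^2 + 1/q) into O(1/tau). *)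

section \<open>Elementary estimates\<close>

lemma abs_sin_minus_self_le: "\<bar>sin x - x\<bar> \<le> \<bar>x\<bar> ^ 3 / 6" for x :: real
proof -
  have "\<bar>sin x - (\<Sum>m<3. sin_coeff m * x ^ m)\<bar> \<le> inverse (fact 3) * \<bar>x\<bar> ^ 3"
    by (rule Maclaurin_sin_bound)
  moreover have "(\<Sum>m<3. sin_coeff m * x ^ m) = x"
    by (simp add: eval_nat_numeral sin_coeff_def)
  ultimately show ?thesis
    by (simp add: fact_numeral)
qed

lemma abs_cos_minus_one_le: "\<bar>cos x - 1\<bar> \<le> x\<^sup>2 / 2" for x :: real
proof -
  have "cos x - 1 = - 2 * (sin (x / 2))\<^sup>2"
    using cos_double_sin[of "x / 2"] by simp
  moreover have "(sin (x / 2))\<^sup>2 \<le> (x / 2)\<^sup>2"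
    using abs_sin_x_le_abs_x[of "x / 2"] by (metis abs_ge_zero power2_abs power_mono)
  ultimately show ?thesis
    by (simp add: power_divide)
qed

lemma sin_ge_third:
  fixes x :: real
  assumes "0 \<le> x" "x \<le> pi / 2"
  shows "x / 3 \<le> sin x"
proof -
  have "x\<^sup>2 \<le> 2\<^sup>2"
    using assms pi_half_less_two by (intro power_mono) auto
  then have "x ^ 3 \<le> 4 * x"
    using mult_left_mono[of "x\<^sup>2" 4 x] assms by (simp add: power2_eq_square power3_eq_cube mult.assoc)
  then show ?thesis
    using abs_le_D2[OF abs_sin_minus_self_le[of x]] assms by simp
qed

lemma abs_cot_minus_inverse_le:
  fixes x :: real
  assumes "0 < x" "x \<le> pi / 2"
  shows "\<bar>cot x - 1 / x\<bar> \<le> 2 * x"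
proof -
  have sin_x: "x / 3 \<le> sin x" "0 < sin x"
    using sin_ge_third[of x] sin_gt_zero[of x] pi_gt_zero assms by auto
  have "x * cos x - sin x = (x - sin x) + x * (cos x - 1)"
    by (simp add: algebra_simps)
  then have "\<bar>x * cos x - sin x\<bar> \<le> \<bar>x - sin x\<bar> + \<bar>x * (cos x - 1)\<bar>"
    by (metis abs_triangle_ineq)
  moreover have "\<bar>x * (cos x - 1)\<bar> \<le> x * (x\<^sup>2 / 2)"
    using abs_cos_minus_one_le[of x] assms by (simp add: abs_mult mult_left_mono)
  moreover have "\<bar>x - sin x\<bar> \<le> x ^ 3 / 6"
    using abs_sin_minus_self_le[of x] assms by (simp add: abs_minus_commute)
  moreover have "x * (x\<^sup>2 / 2) = x ^ 3 / 2"
    by (simp add: power2_eq_square power3_eq_cube)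
  ultimately have "\<bar>x * cos x - sin x\<bar> \<le> 2 * x ^ 3 / 3"
    by linarith
  moreover have "x * (x / 3) \<le> x * sin x"
    using sin_x assms by (simp add: mult_left_mono)
  ultimately have "\<bar>x * cos x - sin x\<bar> / (x * sin x) \<le> (2 * x ^ 3 / 3) / (x * (x / 3))"
    using assms sin_x by (intro frac_le) auto
  also have "\<dots> = 2 * x"
    using assms by (simp add: power3_eq_cube field_simps)
  finally show ?thesis
    using assms sin_x by (simp add: cot_def field_simps abs_divide abs_mult)
qed

lemma sin_sq_ratio_le:
  fixes d w :: real
  assumes "0 < d" "d \<le> w" "w \<le> pi / 2"
  shows "(sin d)\<^sup>2 / (sin w)\<^sup>2 \<le> 9 * d\<^sup>2 / w\<^sup>2" and "(sin d)\<^sup>2 / (sin w)\<^sup>2 \<le> 1"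
proof -
  have sin_w: "w / 3 \<le> sin w" "0 < sin w"
    using sin_ge_third[of w] sin_gt_zero[of w] pi_gt_zero assms by auto
  have sin_d: "0 \<le> sin d" "sin d \<le> d"
    using sin_x_le_x[of d] sin_ge_zero[of d] assms by auto
  have "(sin d)\<^sup>2 / (sin w)\<^sup>2 \<le> d\<^sup>2 / (w / 3)\<^sup>2"
    using sin_d sin_w assms by (intro frac_le power_mono) auto
  then show "(sin d)\<^sup>2 / (sin w)\<^sup>2 \<le> 9 * d\<^sup>2 / w\<^sup>2"
    by (simp add: power_divide mult.commute)
  have "sin d \<le> sin w"
    using assms by (subst sin_mono_le_eq) auto
  then show "(sin d)\<^sup>2 / (sin w)\<^sup>2 \<le> 1"
    using sin_d sin_w by (simp add: power_mono)
qed

lemma sinc_bounds: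
  fixes x :: real
  assumes "0 < x" "x \<le> pi / 2"
  shows "1 - x\<^sup>2 / 6 \<le> sin x / x" and "sin x / x \<le> 1" and "1 / 3 \<le> sin x / x"
proof -
  have "x - x ^ 3 / 6 \<le> sin x"
    using abs_le_D2[OF abs_sin_minus_self_le[of x]] assms by simp
  then have "(x - x ^ 3 / 6) / x \<le> sin x / x"
    using assms by (intro divide_right_mono) auto
  moreover have "(x - x ^ 3 / 6) / x = 1 - x\<^sup>2 / 6"
    using assms by (simp add: field_simps power2_eq_square power3_eq_cube)
  ultimately show "1 - x\<^sup>2 / 6 \<le> sin x / x"
    by simp
  show "sin x / x \<le> 1" "1 / 3 \<le> sin x / x"
    using sin_x_le_x[of x] sin_ge_third[of x] assms by (simp_all add: field_simps)
qed

lemma sin_sq_ratio_approx: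
  fixes d w :: real
  assumes "0 < d" "d \<le> w" "w \<le> pi / 2"
  shows "\<bar>(sin d)\<^sup>2 / (sin w)\<^sup>2 - d\<^sup>2 / w\<^sup>2\<bar> \<le> 3 * d\<^sup>2"
proof -
  define A where "A = sin d / d"
  define B where "B = sin w / w"
  have "d\<^sup>2 \<le> w\<^sup>2"
    using assms by (intro power_mono) auto
  moreover have "1 - d\<^sup>2 / 6 \<le> A" "A \<le> 1" "0 \<le> A"
    using sinc_bounds[of d] assms unfolding A_def by auto
  ultimately have A: "1 - w\<^sup>2 / 6 \<le> A" "A \<le> 1" "0 \<le> A"
    by linarith+
  have B: "1 - w\<^sup>2 / 6 \<le> B" "B \<le> 1" "1 / 3 \<le> B"
    using sinc_bounds[of w] assms unfolding B_def by auto
  have "B\<^sup>2 - A\<^sup>2 = (B - A) * (B + A)"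
    by (simp add: power2_eq_square algebra_simps)
  then have "\<bar>B\<^sup>2 - A\<^sup>2\<bar> = \<bar>B - A\<bar> * (B + A)"
    using A B by (simp add: abs_mult)
  also have "\<dots> \<le> (w\<^sup>2 / 6) * 2"
  proof (rule mult_mono)
    show "\<bar>B - A\<bar> \<le> w\<^sup>2 / 6"
      using A B unfolding abs_le_iff by linarith
  qed (use A B in auto)
  finally have AB: "\<bar>B\<^sup>2 - A\<^sup>2\<bar> \<le> w\<^sup>2 / 3"
    by simp
  have "(sin d)\<^sup>2 / (sin w)\<^sup>2 - d\<^sup>2 / w\<^sup>2 = (d\<^sup>2 / w\<^sup>2) * ((A\<^sup>2 - B\<^sup>2) / B\<^sup>2)"
    using B assms unfolding A_def B_def by (simp add: field_simps power2_eq_square)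
  then have "\<bar>(sin d)\<^sup>2 / (sin w)\<^sup>2 - d\<^sup>2 / w\<^sup>2\<bar> = (d\<^sup>2 / w\<^sup>2) * (\<bar>B\<^sup>2 - A\<^sup>2\<bar> / B\<^sup>2)"
    by (simp add: abs_mult abs_divide abs_minus_commute)
  also have "\<dots> \<le> (d\<^sup>2 / w\<^sup>2) * ((w\<^sup>2 / 3) / (1 / 9))"
    using AB B power_mono[of "1 / 3" B 2] by (intro mult_left_mono frac_le) (auto simp: power2_eq_square)
  also have "\<dots> = 3 * d\<^sup>2"
    using assms by (simp add: field_simps power2_eq_square)
  finally show ?thesis .
qed

lemma abs_sinc_minus_one_le:
  fixes x :: real
  assumes "x \<noteq> 0"
  shows "\<bar>sin x / x - 1\<bar> \<le> x\<^sup>2 / 6"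
proof -
  have "\<bar>sin x / x - 1\<bar> = \<bar>sin x - x\<bar> / \<bar>x\<bar>"
    using assms by (simp add: field_simps abs_divide)
  also have "\<dots> \<le> (\<bar>x\<bar> ^ 3 / 6) / \<bar>x\<bar>"
    using abs_sin_minus_self_le[of x] by (intro divide_right_mono) auto
  also have "\<dots> = x\<^sup>2 / 6"
    using assms by (simp add: power2_eq_square power3_eq_cube)
  finally show ?thesis .
qed

lemma inverse_sinc_bounds:
  fixes x :: real
  assumes "0 < x" "x \<le> pi / 2"
  shows "\<bar>x / sin x - 1\<bar> \<le> x\<^sup>2 / 2" and "x / sin x \<le> 3"
proof -
  have sin_x: "x / 3 \<le> sin x" "0 < sin x"
    using sin_ge_third[of x] sin_gt_zero[of x] pi_gt_zero assms by auto
  have "\<bar>x / sin x - 1\<bar> = \<bar>x - sin x\<bar> / sin x"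
    using sin_x by (simp add: field_simps)
  also have "\<dots> \<le> (x ^ 3 / 6) / (x / 3)"
    using abs_sin_minus_self_le[of x] sin_x assms by (intro frac_le) (auto simp: abs_minus_commute)
  also have "\<dots> = x\<^sup>2 / 2"
    using assms by (simp add: field_simps power2_eq_square power3_eq_cube)
  finally show "\<bar>x / sin x - 1\<bar> \<le> x\<^sup>2 / 2" .
  show "x / sin x \<le> 3"
    using sin_x by (simp add: field_simps)
qed

lemma ln_one_minus_eq_suminf:
  fixes z :: real
  assumes "\<bar>z\<bar> < 1"
  shows "ln (1 - z) = - (\<Sum>n. z ^ Suc n / real (Suc n))"
proof -
  have "ln (1 - z) = (\<Sum>n. (- 1) ^ n * (1 / real (n + 1)) * ((1 - z) - 1) ^ Suc n)"
    using assms by (intro ln_series) auto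
  also have "\<dots> = (\<Sum>n. - (z ^ Suc n / real (Suc n)))"
  proof -
    have "(- 1) ^ n * (1 / real (n + 1)) * ((1 - z) - 1) ^ Suc n = - (z ^ Suc n / real (Suc n))" for n
    proof -
      have "((1 - z) - 1) ^ Suc n = (- 1) ^ Suc n * z ^ Suc n"
        by (simp add: power_minus[symmetric])
      then have "(- 1) ^ n * (1 / real (n + 1)) * ((1 - z) - 1) ^ Suc n
          = ((- 1) ^ n * (- 1) ^ Suc n) * (z ^ Suc n / real (Suc n))"
        by (simp only:) simp
      moreover have "(- 1 :: real) ^ n * (- 1) ^ Suc n = - 1"
        by (simp add: power_add[symmetric] mult_2[symmetric])
      ultimately show ?thesis
        by simp
    qed
    then show ?thesis
      by (simp only:)
  qed
  also have "\<dots> = - (\<Sum>n. z ^ Suc n / real (Suc n))"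
  proof (rule suminf_minus)
    have "summable (\<lambda>n. \<bar>z\<bar> * \<bar>z\<bar> ^ n)"
      using assms by (intro summable_mult summable_geometric) simp
    moreover have "norm (z ^ Suc n / real (Suc n)) \<le> \<bar>z\<bar> * \<bar>z\<bar> ^ n" for n
      using divide_left_mono[of 1 "real (Suc n)" "\<bar>z\<bar> ^ Suc n"] by (simp add: abs_mult power_abs)
    ultimately show "summable (\<lambda>n. z ^ Suc n / real (Suc n))"
      by (rule summable_comparison_test')
  qed
  finally show ?thesis .
qed

lemma ln_one_minus_taylor_remainder:
  fixes z :: real
  assumes z: "\<bar>z\<bar> \<le> 1 / 2"
  shows "\<bar>ln (1 - z) + (\<Sum>j = 1..N. z ^ j / real j)\<bar> \<le> 2 * \<bar>z\<bar> ^ (N + 1)"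
proof -
  define f where "f n = z ^ Suc n / real (Suc n)" for n
  have z1: "norm \<bar>z\<bar> < 1"
    using z by simp
  have f_le: "norm (f n) \<le> \<bar>z\<bar> ^ Suc n" for n
    using divide_left_mono[of 1 "real (Suc n)" "\<bar>z\<bar> ^ Suc n"] by (simp add: f_def abs_mult power_abs)
  have "summable f"
    by (rule summable_comparison_test'[OF summable_mult[OF summable_geometric[OF z1], of "\<bar>z\<bar>"]])
      (use f_le in auto)
  have "(\<Sum>j = 1..N. z ^ j / real j) = (\<Sum>i<N. f i)"
    unfolding f_def by (rule sum.reindex_bij_witness[of _ Suc "\<lambda>j. j - 1"]) auto
  then have "ln (1 - z) + (\<Sum>j = 1..N. z ^ j / real j) = - (\<Sum>n. f (n + N))"
    using ln_one_minus_eq_suminf[of z] suminf_split_initial_segment[OF \<open>summable f\<close>, of N] z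
    unfolding f_def[symmetric] by simp
  moreover have "norm (\<Sum>n. f (n + N)) \<le> (\<Sum>n. \<bar>z\<bar> ^ (N + 1) * \<bar>z\<bar> ^ n)"
  proof (rule norm_suminf_le)
    show "norm (f (n + N)) \<le> \<bar>z\<bar> ^ (N + 1) * \<bar>z\<bar> ^ n" for n
      using f_le[of "n + N"] by (simp add: power_add mult_ac)
    show "summable (\<lambda>n. \<bar>z\<bar> ^ (N + 1) * \<bar>z\<bar> ^ n)"
      by (rule summable_mult[OF summable_geometric[OF z1]])
  qed
  moreover have "(\<Sum>n. \<bar>z\<bar> ^ (N + 1) * \<bar>z\<bar> ^ n) = \<bar>z\<bar> ^ (N + 1) * (1 / (1 - \<bar>z\<bar>))"
    using suminf_mult[OF summable_geometric[OF z1]] suminf_geometric[OF z1] by simp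
  moreover have "\<bar>z\<bar> ^ (N + 1) * (1 / (1 - \<bar>z\<bar>)) \<le> \<bar>z\<bar> ^ (N + 1) * 2"
    using z by (intro mult_left_mono) (auto simp: field_simps)
  ultimately show ?thesis
    by (simp add: mult.commute)
qed

lemma abs_ln_diff_le:
  fixes a b m :: real
  assumes "0 < m" "m \<le> a" "m \<le> b"
  shows "\<bar>ln a - ln b\<bar> \<le> \<bar>a - b\<bar> / m"
proof -
  have "ln x - ln y \<le> \<bar>x - y\<bar> / m" if "m \<le> x" "m \<le> y" for x y
  proof -
    have "ln x - ln y = ln (x / y)"
      using that assms by (simp add: ln_div)
    also have "\<dots> \<le> x / y - 1"
      using that assms by (intro ln_le_minus_one) auto
    also have "\<dots> = (x - y) / y"
      using that assms by (simp add: field_simps)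
    also have "\<dots> \<le> \<bar>x - y\<bar> / y"
      using that assms by (intro divide_right_mono) auto
    also have "\<dots> \<le> \<bar>x - y\<bar> / m"
      using that assms by (intro divide_left_mono) auto
    finally show ?thesis .
  qed
  from this[of a b] this[of b a] show ?thesis
    using assms by (simp add: abs_minus_commute)
qed

lemma self_div_power2_le: "real n / 2 ^ n \<le> 2 / real n"
proof -
  have "n\<^sup>2 \<le> 2 ^ (n + 1)"
  proof (induction n rule: less_induct)
    case (less n)
    show ?case
    proof (cases "n \<le> 3")
      case True
      then have "n \<in> {0, 1, 2, 3}"
        by auto
      then show ?thesis
        by auto
    next
      case False
      then obtain k where k: "n = Suc k" "3 \<le> k"
        by (cases n) auto
      have "3 * k \<le> k * k" "(Suc k)\<^sup>2 = k * k + 2 * k + 1" "2 * k\<^sup>2 = 2 * (k * k)"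
        using k(2) by (simp_all add: power2_eq_square)
      then have "(Suc k)\<^sup>2 \<le> 2 * k\<^sup>2"
        using k(2) by linarith
      then show ?thesis
        using less[of k] k by simp
    qed
  qed
  then have "real (n\<^sup>2) \<le> real (2 ^ (n + 1))"
    by (simp only: of_nat_le_iff)
  then have "real n * real n \<le> 2 * 2 ^ n"
    by (simp add: power2_eq_square)
  then show ?thesis
    by (cases "n = 0") (simp_all add: field_simps)
qed

lemma prod_symmetric_split:
  fixes g :: "nat \<Rightarrow> 'a::comm_monoid_mult"
  assumes "1 \<le> q" and sym: "\<And>t. 0 < t \<Longrightarrow> t < q \<Longrightarrow> g (q - t) = g t"
  shows "(\<Prod>t = 1..q - 1. g t)
    = (\<Prod>t = 1..(q - 1) div 2. g t)\<^sup>2 * (if even q then g (q div 2) else 1)"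
proof -
  define M where "M = (q - 1) div 2"
  define mid where "mid = (if even q then {q div 2} else {})"
  have q_cases: "q = 2 * M + 1 \<and> mid = {} \<or> q = 2 * M + 2 \<and> mid = {M + 1}"
  proof (cases "even q")
    case True
    then have "q = 2 * M + 2"
      using assms(1) unfolding M_def by presburger
    then show ?thesis
      using True by (simp add: mid_def)
  next
    case False
    then have "q = 2 * M + 1"
      using assms(1) unfolding M_def by presburger
    then show ?thesis
      using False by (simp add: mid_def)
  qed
  have reflect: "(\<lambda>t. q - t) ` {1..M} = {q - M..q - 1}"
  proof (intro equalityI subsetI)
    fix s assume "s \<in> {q - M..q - 1}"
    then have "s = q - (q - s)" "q - s \<in> {1..M}"
      using q_cases by auto
    then show "s \<in> (\<lambda>t. q - t) ` {1..M}"
      by blast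
  qed (use q_cases in auto)
  have "inj_on (\<lambda>t. q - t) {1..M}"
    using q_cases by (auto simp: inj_on_def)
  then have "(\<Prod>t \<in> {q - M..q - 1}. g t) = (\<Prod>t = 1..M. g (q - t))"
    unfolding reflect[symmetric] by (simp add: prod.reindex)
  also have "\<dots> = (\<Prod>t = 1..M. g t)"
    using q_cases by (intro prod.cong) (auto intro!: sym)
  finally have right: "(\<Prod>t \<in> {q - M..q - 1}. g t) = (\<Prod>t = 1..M. g t)" .
  have "{1..q - 1} = ({1..M} \<union> {q - M..q - 1}) \<union> mid"
    using q_cases by auto
  then have "(\<Prod>t = 1..q - 1. g t) = (\<Prod>t \<in> {1..M} \<union> {q - M..q - 1}. g t) * (\<Prod>t \<in> mid. g t)"
    by (simp only:) (rule prod.union_disjoint, use q_cases in auto)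
  also have "(\<Prod>t \<in> {1..M} \<union> {q - M..q - 1}. g t) = (\<Prod>t = 1..M. g t) * (\<Prod>t \<in> {q - M..q - 1}. g t)"
    by (rule prod.union_disjoint) (use q_cases in auto)
  finally show ?thesis
    unfolding right M_def[symmetric] by (simp add: mid_def power2_eq_square)
qed

lemma sum_by_parts:
  fixes a g :: "nat \<Rightarrow> 'a::comm_ring"
  shows "(\<Sum>t = 1..m. a t * g t)
    = (\<Sum>s = 1..m. a s) * g m + (\<Sum>t = 1..m - 1. (\<Sum>s = 1..t. a s) * (g t - g (t + 1)))"
proof (induction m)
  case (Suc m)
  have "(\<Sum>t = 1..m. (\<Sum>s = 1..t. a s) * (g t - g (t + 1)))
      = (\<Sum>t = 1..m - 1. (\<Sum>s = 1..t. a s) * (g t - g (t + 1))) + (\<Sum>s = 1..m. a s) * (g m - g (m + 1))"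
    by (cases m) (simp_all add: sum.cl_ivl_Suc)
  with Suc show ?case
    by (simp add: sum.cl_ivl_Suc algebra_simps)
qed simp

lemma abs_prod_diff_le_sum:
  fixes a b :: "'i \<Rightarrow> real"
  assumes "finite I" "\<And>i. i \<in> I \<Longrightarrow> a i \<in> {0..1} \<and> b i \<in> {0..1}"
  shows "\<bar>(\<Prod>i\<in>I. a i) - (\<Prod>i\<in>I. b i)\<bar> \<le> (\<Sum>i\<in>I. \<bar>a i - b i\<bar>)"
  using assms
proof (induction I rule: finite_induct)
  case (insert j I)
  let ?A = "\<Prod>i\<in>I. a i" and ?B = "\<Prod>i\<in>I. b i"
  have "0 \<le> ?B" "?B \<le> 1" "a j \<in> {0..1}"
    using insert by (auto intro: prod_nonneg prod_le_1)
  have "a j * ?A - b j * ?B = a j * (?A - ?B) + (a j - b j) * ?B"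
    by (simp add: algebra_simps)
  then have "\<bar>a j * ?A - b j * ?B\<bar> \<le> \<bar>a j\<bar> * \<bar>?A - ?B\<bar> + \<bar>a j - b j\<bar> * \<bar>?B\<bar>"
    by (metis abs_mult abs_triangle_ineq)
  also have "\<dots> \<le> 1 * \<bar>?A - ?B\<bar> + \<bar>a j - b j\<bar> * 1"
    using \<open>0 \<le> ?B\<close> \<open>?B \<le> 1\<close> \<open>a j \<in> {0..1}\<close> by (intro add_mono mult_mono) auto
  finally show ?case
    using insert by simp
qed simp

lemma sum_inverse_squares_tail_le:
  assumes "1 \<le> k"
  shows "(\<Sum>t = k + 1..m. 1 / real t ^ 2) \<le> 1 / real k"
proof (cases "k \<le> m")
  case True
  have "(\<Sum>t = k + 1..m. 1 / real t ^ 2) = (\<Sum>t = k..<m. 1 / real (Suc t) ^ 2)"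
    by (rule sum.reindex_bij_witness[of _ Suc "\<lambda>t. t - 1"]) auto
  also have "\<dots> \<le> (\<Sum>t = k..<m. - 1 / real (Suc t) - - 1 / real t)"
  proof (rule sum_mono)
    fix t assume "t \<in> {k..<m}"
    then have "1 \<le> real t"
      using assms by simp
    then have "1 / real (Suc t) ^ 2 \<le> 1 / (real t * real (Suc t))"
      by (intro divide_left_mono) (auto simp: power2_eq_square)
    also have "\<dots> = - 1 / real (Suc t) - - 1 / real t"
      using \<open>1 \<le> real t\<close> by (simp add: field_simps)
    finally show "1 / real (Suc t) ^ 2 \<le> - 1 / real (Suc t) - - 1 / real t" .
  qed
  also have "\<dots> = 1 / real k - 1 / real m"
    using sum_Suc_diff'[OF True, of "\<lambda>t. - 1 / real t"] by simp
  also have "\<dots> \<le> 1 / real k"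
    by simp
  finally show ?thesis .
qed simp

section \<open>Continued fractions\<close>

lemma cf_rem_bounds:
  assumes "0 < x" "x < 1" "x \<notin> \<rat>"
  shows "0 < cf_rem x k \<and> cf_rem x k < 1 \<and> cf_rem x k \<notin> \<rat>"
proof (induction k)
  case (Suc k)
  let ?r = "cf_rem x k"
  have "1 / ?r \<notin> \<rat>"
    using Suc Rats_divide[OF Rats_1, of "1 / ?r"] by auto
  then have irrational: "frac (1 / ?r) \<notin> \<rat>"
    using Rats_add[of "frac (1 / ?r)" "of_int \<lfloor>1 / ?r\<rfloor>"] by (auto simp: frac_def)
  then have "frac (1 / ?r) \<noteq> 0"
    by (metis Rats_0)
  then show ?case
    using irrational frac_ge_0[of "1 / ?r"] frac_lt_1[of "1 / ?r"] by simp
qed (use assms in simp)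

lemma
  assumes "0 < x" "x < 1" "x \<notin> \<rat>"
  shows cf_a_plus_cf_rem: "real (cf_a x (Suc k)) + cf_rem x (Suc k) = 1 / cf_rem x k"
    and cf_a_pos: "1 \<le> cf_a x (Suc k)"
proof -
  let ?r = "cf_rem x k"
  have "1 < 1 / ?r"
    using cf_rem_bounds[OF assms, of k] by simp
  then have "1 \<le> \<lfloor>1 / ?r\<rfloor>"
    by (simp add: le_floor_iff)
  then have "real (nat \<lfloor>1 / ?r\<rfloor>) = of_int \<lfloor>1 / ?r\<rfloor>"
    by (intro of_nat_nat) linarith
  then have a: "real (cf_a x (Suc k)) = of_int \<lfloor>1 / ?r\<rfloor>"
    by (simp add: cf_a_def)
  then show "real (cf_a x (Suc k)) + cf_rem x (Suc k) = 1 / ?r"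
    by (simp add: frac_def)
  show "1 \<le> cf_a x (Suc k)"
    using a \<open>1 \<le> \<lfloor>1 / ?r\<rfloor>\<close> by linarith
qed

text \<open>\<open>cf_rem x n\<close> is \<open>1 / \<alpha>\<^sub>n\<^sup>+\<close>, so this is the classical
  \<open>\<alpha> = (p\<^sub>n\<^sub>+\<^sub>1 \<alpha>\<^sub>n\<^sup>+ + p\<^sub>n) / (q\<^sub>n\<^sub>+\<^sub>1 \<alpha>\<^sub>n\<^sup>+ + q\<^sub>n)\<close> in the indexing of the definitions.\<close>
lemma cf_complete_quotient:
  assumes "0 < x" "x < 1" "x \<notin> \<rat>"
  shows "x * (real (cf_q x (Suc n)) + cf_rem x n * real (cf_q x n))
       = real (cf_p x (Suc n)) + cf_rem x n * real (cf_p x n)"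
proof (induction n)
  case (Suc n)
  let ?r = "cf_rem x n"
  have r: "0 < ?r" and a: "real (cf_a x (Suc n)) = 1 / ?r - cf_rem x (Suc n)"
    using cf_rem_bounds[OF assms, of n] cf_a_plus_cf_rem[OF assms, of n] by auto
  have step: "real (f (Suc (Suc n))) + cf_rem x (Suc n) * real (f (Suc n))
      = (real (f (Suc n)) + ?r * real (f n)) / ?r"
    if "f (Suc (Suc n)) = cf_a x (Suc n) * f (Suc n) + f n" for f :: "nat \<Rightarrow> nat"
    using r unfolding that of_nat_add of_nat_mult a by (simp add: field_simps)
  show ?case
    unfolding step[of "cf_q x", OF cf_q.simps(3)] step[of "cf_p x", OF cf_p.simps(3)]
    using Suc r by (simp add: field_simps)
qed simp

lemma cf_det:
  "of_nat (cf_q x (Suc n)) * of_nat (cf_p x n) - of_nat (cf_p x (Suc n)) * of_nat (cf_q x n)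
    = ((- 1) ^ n :: 'a::comm_ring_1)"
  by (induction n) (simp_all add: algebra_simps)

lemma cf_q_coprime: "coprime (cf_q x (Suc n)) (cf_q x n)"
proof -
  have "coprime (int (cf_q x (Suc n))) (int (cf_q x n))"
  proof (rule coprimeI)
    fix d assume "d dvd int (cf_q x (Suc n))" "d dvd int (cf_q x n)"
    then have "d dvd int (cf_q x (Suc n)) * int (cf_p x n) - int (cf_p x (Suc n)) * int (cf_q x n)"
      by (intro dvd_diff dvd_mult2 dvd_mult)
    then show "is_unit d"
      unfolding cf_det by (rule dvd_unit_imp_unit) (simp add: is_unit_power_iff)
  qed
  then show ?thesis
    by simp
qed

lemma cf_q_growth:
  assumes "0 < x" "x < 1" "x \<notin> \<rat>"
  shows "n \<le> cf_q x (Suc n) \<and> Suc n \<le> cf_q x (Suc (Suc n))"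
proof (induction n)
  case 0
  show ?case
    using cf_a_pos[OF assms, of 0] by simp
next
  case (Suc n)
  have "cf_q x (Suc (Suc n)) \<le> cf_a x (Suc (Suc n)) * cf_q x (Suc (Suc n))"
    using cf_a_pos[OF assms] by simp
  moreover have "1 \<le> cf_q x (Suc n)"
    using Suc.IH by (cases n) auto
  moreover have "cf_q x (Suc (Suc (Suc n))) = cf_a x (Suc (Suc n)) * cf_q x (Suc (Suc n)) + cf_q x (Suc n)"
    by (simp only: cf_q.simps)
  ultimately show ?case
    using Suc.IH by linarith
qed

lemma cf_q_pos:
  assumes "0 < x" "x < 1" "x \<notin> \<rat>" "0 < n"
  shows "0 < cf_q x n"
  using cf_q_growth[OF assms(1-3), of "n - 2"] assms(4)
  by (cases "n = 1") (auto simp: numeral_2_eq_2 Suc_diff_Suc)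

lemma filterlim_cf_q:
  assumes "0 < x" "x < 1" "x \<notin> \<rat>"
  shows "filterlim (cf_q x) at_top sequentially"
  unfolding filterlim_at_top
proof
  fix b
  have "b \<le> cf_q x n" if "Suc b \<le> n" for n
    using cf_q_growth[OF assms, of "n - 1"] that by (cases n) auto
  then show "eventually (\<lambda>n. b \<le> cf_q x n) sequentially"
    unfolding eventually_at_top_linorder by blast
qed

lemma
  assumes "0 < x" "x < 1" "x \<notin> \<rat>" "0 < n"
  shows abs_Lam_eq: "\<bar>Lam x n\<bar> = cc x n / real (cf_q x n)"
    and cc_pos: "0 < cc x n"
    and cc_less_1: "cc x n < 1"
proof -
  obtain m where n: "n = Suc m"
    using assms(4) by (cases n) auto
  let ?r = "cf_rem x m" and ?Q = "real (cf_q x n)" and ?Q' = "real (cf_q x m)"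
  have r: "0 < ?r" "?r < 1"
    using cf_rem_bounds[OF assms(1-3)] by auto
  have Q: "1 \<le> ?Q"
    using cf_q_pos[OF assms] by simp
  define X where "X = ?Q + ?r * ?Q'"
  have "?r * ?Q < 1 * ?Q" "0 < ?r * ?Q" "0 \<le> ?r * ?Q'"
    using r Q by (auto intro: mult_strict_right_mono)
  then have "?r * ?Q < X" "0 < X"
    unfolding X_def by linarith+
  have "\<bar>Lam x n\<bar> = ?r / X"
  proof -
    have "x * X = real (cf_p x n) + ?r * real (cf_p x m)"
      using cf_complete_quotient[OF assms(1-3), of m] unfolding X_def n .
    moreover have "Lam x n * X = ?Q * (x * X) - real (cf_p x n) * X"
      by (simp add: Lam_def algebra_simps)
    ultimately have "Lam x n * X = ?r * (?Q * cf_p x m - cf_p x n * ?Q')"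
      by (simp add: X_def algebra_simps)
    also have "\<dots> = ?r * (- 1) ^ m"
      unfolding n cf_det ..
    finally have "\<bar>Lam x n * X\<bar> = ?r"
      using r by (simp add: abs_mult)
    then show ?thesis
      using \<open>0 < X\<close> by (simp add: abs_mult field_simps)
  qed
  moreover have cc: "cc x n = ?r * ?Q / X"
    using r Q unfolding cc_def alpha_plus_def alpha_minus_def X_def n by (simp add: field_simps)
  ultimately show "\<bar>Lam x n\<bar> = cc x n / ?Q"
    using Q by simp
  show "0 < cc x n" "cc x n < 1"
    unfolding cc using r Q \<open>0 < X\<close> \<open>?r * ?Q < X\<close> by simp_all
qed

section \<open>The factors at a fixed convergent\<close>

text \<open>The data of the \<open>n\<close>-th convergent are \<open>q = q\<^sub>n\<close>, \<open>p = q\<^sub>n\<^sub>-\<^sub>1\<close> and \<open>c = c\<^sub>n\<close>;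
  \<open>100 \<le> q\<close> stands for \<open>n\<close> being large.  Then \<open>\<xi> t = \<xi>\<^sub>n\<^sub>t\<close>, and as \<open>\<bar>\<Lambda>\<^sub>n\<bar> = c / q\<close> we have
  \<open>s\<^sub>n\<^sub>t = 2 sin (\<phi> t)\<close>, so \<open>\<rho> t\<close> is the \<open>t\<close>-th factor of \<open>B\<^sub>n\<close>.\<close>

locale convergent_level =
  fixes q p :: nat and c :: real
  assumes q_ge_100: "100 \<le> q" and coprime_q_p: "coprime q p"
    and c_pos: "0 < c" and c_less_1: "c < 1"
begin

definition \<xi> :: "nat \<Rightarrow> real" where "\<xi> t = frac (real t * real p / real q) - 1 / 2"
definition \<theta> :: "nat \<Rightarrow> real" where "\<theta> t = pi * real t / real q"
definition \<epsilon> :: "nat \<Rightarrow> real" where "\<epsilon> t = pi * c * \<xi> t / real q"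
definition \<phi> :: "nat \<Rightarrow> real" where "\<phi> t = \<theta> t - \<epsilon> t"
definition \<rho> :: "nat \<Rightarrow> real" where "\<rho> t = sin (\<phi> t) / sin (\<theta> t)"
definition M :: nat where "M = (q - 1) div 2"

lemma q_pos: "0 < real q"
  using q_ge_100 by simp

lemma M_bounds: "2 * M + 1 \<le> q" "q \<le> 2 * M + 2" "2 \<le> M"
  using q_ge_100 unfolding M_def by auto

lemma abs_xi_le: "\<bar>\<xi> t\<bar> \<le> 1 / 2"
  using frac_ge_0[of "real t * real p / real q"] frac_lt_1[of "real t * real p / real q"]
  unfolding \<xi>_def abs_le_iff by linarith

lemma abs_c_xi_le: "\<bar>c * \<xi> t\<bar> \<le> 1 / 2"
  using mult_mono[OF _ abs_xi_le[of t], of "\<bar>c\<bar>" 1] c_pos c_less_1 by (simp add: abs_mult)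

lemma abs_eps_le: "\<bar>\<epsilon> t\<bar> \<le> pi / (2 * real q)"
proof -
  have "\<bar>\<epsilon> t\<bar> = pi * \<bar>c * \<xi> t\<bar> / real q"
    unfolding \<epsilon>_def by (simp add: abs_mult)
  also have "\<dots> \<le> pi * (1 / 2) / real q"
    using abs_c_xi_le[of t] q_pos by (intro divide_right_mono mult_left_mono) auto
  finally show ?thesis
    by simp
qed

text \<open>Since \<open>p\<close> is a unit mod \<open>q\<close>, the fractions \<open>t p / q\<close> with \<open>0 < t < q\<close> are never
  integers; this makes \<open>\<xi>\<close> odd under \<open>t \<mapsto> q - t\<close>.\<close>
lemma xi_reflect:
  assumes "0 < t" "t < q"
  shows "\<xi> (q - t) = - \<xi> t"
proof -
  let ?x = "real t * real p / real q"
  have "?x \<notin> \<int>"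
  proof
    assume "?x \<in> \<int>"
    then obtain k where "?x = of_int k"
      by (auto elim: Ints_cases)
    then have "real (t * p) = of_int k * real q"
      using q_pos by (simp add: field_simps)
    then have "int (t * p) = k * int q"
      by (metis of_int_eq_iff of_int_mult of_int_of_nat_eq)
    then have "q dvd t * p"
      by (metis dvd_triv_right of_nat_dvd_iff)
    then show False
      using coprime_q_p assms by (auto simp: coprime_dvd_mult_left_iff dest: nat_dvd_not_less)
  qed
  have "real (q - t) * real p / real q = real p - ?x"
    using assms q_pos by (simp add: of_nat_diff field_simps)
  then have "frac (real (q - t) * real p / real q) = frac (- ?x)"
    by (metis frac_add_of_int_left of_int_of_nat_eq uminus_add_conv_diff add.commute diff_conv_add_uminus)
  also have "\<dots> = 1 - frac ?x"
    using \<open>?x \<notin> \<int>\<close> by (simp add: frac_neg)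
  finally show ?thesis
    unfolding \<xi>_def by simp
qed

lemma xi_mid:
  assumes "even q"
  shows "\<xi> (q div 2) = 0"
proof -
  have "odd p"
    using coprime_q_p assms by auto
  then obtain k where "p = 2 * k + 1"
    by (auto elim: oddE)
  then have "real (q div 2) * real p / real q = of_int (int k) + 1 / 2"
    using assms q_pos by (auto elim!: evenE simp: field_simps)
  then have "frac (real (q div 2) * real p / real q) = frac (1 / 2)"
    by (simp only: frac_add_of_int_left)
  then show ?thesis
    unfolding \<xi>_def by (simp add: frac_eq)
qed

lemma theta_phi_reflect:
  assumes "0 < t" "t < q"
  shows "\<theta> (q - t) = pi - \<theta> t" "\<phi> (q - t) = pi - \<phi> t"
proof -
  show "\<theta> (q - t) = pi - \<theta> t"
    unfolding \<theta>_def using assms q_pos by (simp add: of_nat_diff field_simps)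
  then show "\<phi> (q - t) = pi - \<phi> t"
    unfolding \<phi>_def \<epsilon>_def xi_reflect[OF assms] by simp
qed

lemma theta_phi_mid:
  assumes "even q"
  shows "\<theta> (q div 2) = pi / 2" "\<phi> (q div 2) = pi / 2"
proof -
  show "\<theta> (q div 2) = pi / 2"
    unfolding \<theta>_def using assms q_pos by (auto elim!: evenE)
  then show "\<phi> (q div 2) = pi / 2"
    unfolding \<phi>_def \<epsilon>_def xi_mid[OF assms] by simp
qed

lemma theta_bounds:
  assumes "1 \<le> t" "t \<le> M"
  shows "0 < \<theta> t" "\<theta> t \<le> pi / 2"
proof -
  show "0 < \<theta> t"
    unfolding \<theta>_def using assms q_pos by simp
  have "2 * real t \<le> real q"
    using M_bounds assms by linarith
  then show "\<theta> t \<le> pi / 2"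
    unfolding \<theta>_def using q_pos by (simp add: field_simps mult_left_mono)
qed

lemma sin_theta_ge:
  assumes "1 \<le> t" "t \<le> M"
  shows "pi * real t / (3 * real q) \<le> sin (\<theta> t)" "0 < sin (\<theta> t)"
  using sin_ge_third[of "\<theta> t"] sin_gt_zero[of "\<theta> t"] theta_bounds[OF assms] pi_gt_zero
  unfolding \<theta>_def by auto

lemma phi_eq: "\<phi> t = pi * (real t - c * \<xi> t) / real q"
  unfolding \<phi>_def \<theta>_def \<epsilon>_def by (simp add: diff_divide_distrib algebra_simps)

lemma phi_bounds:
  assumes "1 \<le> t" "t \<le> M"
  shows "pi * real t / (2 * real q) \<le> \<phi> t" "\<phi> t \<le> pi / 2"
proof -
  define u where "u = real t - c * \<xi> t"
  have phi: "\<phi> t = pi * u / real q"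
    unfolding u_def by (rule phi_eq)
  have "real t / 2 \<le> u" "u \<le> real q / 2"
    using abs_c_xi_le[of t] assms M_bounds unfolding u_def abs_le_iff by linarith+
  then have "pi * (real t / 2) / real q \<le> pi * u / real q" "pi * u / real q \<le> pi * (real q / 2) / real q"
    using q_pos by (intro divide_right_mono mult_left_mono; simp)+
  then show "pi * real t / (2 * real q) \<le> \<phi> t" "\<phi> t \<le> pi / 2"
    unfolding phi using q_pos by simp_all
qed

lemma rho_eq_cos_sin_cot:
  assumes "1 \<le> t" "t \<le> M"
  shows "\<rho> t = cos (\<epsilon> t) - sin (\<epsilon> t) * cot (\<theta> t)"
  unfolding \<rho>_def \<phi>_def sin_diff cot_def using sin_theta_ge[OF assms] by (simp add: field_simps)

lemma abs_cot_theta_le: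
  assumes "1 \<le> t" "t \<le> M"
  shows "\<bar>cot (\<theta> t)\<bar> \<le> 3 * real q / (pi * real t)"
proof -
  have "0 \<le> cos (\<theta> t)"
    using theta_bounds[OF assms] by (intro cos_ge_zero) auto
  then have "\<bar>cot (\<theta> t)\<bar> \<le> 1 / sin (\<theta> t)"
    using sin_theta_ge[OF assms] by (simp add: cot_def abs_divide divide_right_mono)
  also have "\<dots> \<le> 1 / (pi * real t / (3 * real q))"
    using sin_theta_ge[OF assms] assms q_pos by (intro divide_left_mono) auto
  finally show ?thesis
    by simp
qed

lemma abs_rho_minus_linear_le:
  assumes "1 \<le> t" "t \<le> M"
  shows "\<bar>\<rho> t - (1 - \<epsilon> t * cot (\<theta> t))\<bar> \<le> 3 / (real q)\<^sup>2"
proof -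
  have "\<bar>(sin (\<epsilon> t) - \<epsilon> t) * cot (\<theta> t)\<bar> \<le> \<bar>\<epsilon> t\<bar> ^ 3 / 6 * \<bar>cot (\<theta> t)\<bar>"
    unfolding abs_mult using abs_sin_minus_self_le by (intro mult_right_mono) auto
  also have "\<dots> \<le> (pi / (2 * real q)) ^ 3 / 6 * (3 * real q / pi)"
  proof (intro mult_mono divide_right_mono power_mono)
    have "3 * real q / (pi * real t) \<le> 3 * real q / (pi * 1)"
      using assms q_pos by (intro divide_left_mono mult_left_mono) auto
    then show "\<bar>cot (\<theta> t)\<bar> \<le> 3 * real q / pi"
      using abs_cot_theta_le[OF assms] by simp
  qed (use abs_eps_le in auto)
  also have "\<dots> = pi\<^sup>2 / (16 * (real q)\<^sup>2)"
    using q_pos by (simp add: field_simps power3_eq_cube power2_eq_square)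
  finally have "\<bar>(sin (\<epsilon> t) - \<epsilon> t) * cot (\<theta> t)\<bar> \<le> pi\<^sup>2 / (16 * (real q)\<^sup>2)" .
  moreover have "\<bar>cos (\<epsilon> t) - 1\<bar> \<le> pi\<^sup>2 / (8 * (real q)\<^sup>2)"
  proof -
    have "(\<epsilon> t)\<^sup>2 \<le> (pi / (2 * real q))\<^sup>2"
      using abs_eps_le[of t] by (metis abs_ge_zero power2_abs power_mono)
    then show ?thesis
      using abs_cos_minus_one_le[of "\<epsilon> t"] by (simp add: power_divide power_mult_distrib)
  qed
  moreover have "\<rho> t - (1 - \<epsilon> t * cot (\<theta> t)) = (cos (\<epsilon> t) - 1) - (sin (\<epsilon> t) - \<epsilon> t) * cot (\<theta> t)"
    unfolding rho_eq_cos_sin_cot[OF assms] by (simp add: algebra_simps)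
  then have "\<bar>\<rho> t - (1 - \<epsilon> t * cot (\<theta> t))\<bar>
      \<le> \<bar>cos (\<epsilon> t) - 1\<bar> + \<bar>(sin (\<epsilon> t) - \<epsilon> t) * cot (\<theta> t)\<bar>"
    by (metis abs_triangle_ineq4)
  moreover have "pi\<^sup>2 / (8 * (real q)\<^sup>2) + pi\<^sup>2 / (16 * (real q)\<^sup>2) \<le> 3 / (real q)\<^sup>2"
    using pi_less_4 q_pos power_strict_mono[of pi 4 2] by (simp add: field_simps)
  ultimately show ?thesis
    by linarith
qed

lemma abs_eps_cot_le:
  assumes "1 \<le> t" "t \<le> M"
  shows "\<bar>\<epsilon> t * cot (\<theta> t)\<bar> \<le> 3 / (2 * real t)"
proof -
  have "\<bar>\<epsilon> t * cot (\<theta> t)\<bar> \<le> (pi / (2 * real q)) * (3 * real q / (pi * real t))"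
    unfolding abs_mult using abs_eps_le abs_cot_theta_le[OF assms] by (intro mult_mono) auto
  also have "\<dots> = 3 / (2 * real t)"
    using q_pos by (simp add: field_simps)
  finally show ?thesis .
qed

text \<open>Since \<open>\<epsilon> t / \<theta> t = c \<xi> t / t\<close>, this is the first-order part of \<open>cot \<theta> = 1 / \<theta> + O(\<theta>)\<close>.\<close>
lemma abs_eps_cot_minus_le:
  assumes "1 \<le> t" "t \<le> M"
  shows "\<bar>\<epsilon> t * cot (\<theta> t) - c * \<xi> t / real t\<bar> \<le> pi\<^sup>2 * real t / (real q)\<^sup>2"
proof -
  have "c * \<xi> t / real t = \<epsilon> t * (1 / \<theta> t)"
    unfolding \<epsilon>_def \<theta>_def using q_pos assms by (simp add: field_simps)
  then have "\<epsilon> t * cot (\<theta> t) - c * \<xi> t / real t = \<epsilon> t * (cot (\<theta> t) - 1 / \<theta> t)"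
    by (simp only: right_diff_distrib)
  then have "\<bar>\<epsilon> t * cot (\<theta> t) - c * \<xi> t / real t\<bar> = \<bar>\<epsilon> t\<bar> * \<bar>cot (\<theta> t) - 1 / \<theta> t\<bar>"
    by (simp add: abs_mult)
  also have "\<dots> \<le> (pi / (2 * real q)) * (2 * \<theta> t)"
    using abs_eps_le abs_cot_minus_inverse_le theta_bounds[OF assms] by (intro mult_mono) auto
  also have "\<dots> = pi\<^sup>2 * real t / (real q)\<^sup>2"
    unfolding \<theta>_def using q_pos by (simp add: field_simps power2_eq_square)
  finally show ?thesis .
qed

lemma ln_rho_expansion:
  assumes "1 \<le> t" "t \<le> M" "1 \<le> N"
  shows "\<bar>ln (\<rho> t) + \<epsilon> t * cot (\<theta> t) + (\<Sum>j = 2..N. (1 / real j) * (c * \<xi> t / real t) ^ j)\<bar>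
    \<le> 9 * pi\<^sup>2 * real t / (real q)\<^sup>2 + 1 / 2 ^ N"
proof -
  define z where "z = c * \<xi> t / real t"
  have z: "\<bar>z\<bar> \<le> 1 / 2"
    using abs_c_xi_le[of t] assms(1) frac_le[of "\<bar>c * \<xi> t\<bar>" "1 / 2" 1 "real t"]
    unfolding z_def by (simp add: abs_divide)
  have pi_sq: "pi\<^sup>2 \<le> 16"
    using pi_less_4 power_mono[of pi 4 2] by simp
  have "4 \<le> pi\<^sup>2"
    using pi_ge_two power_mono[of 2 pi 2] by simp
  then have "3 \<le> pi\<^sup>2 * real t"
    using assms(1) mult_mono[of 4 "pi\<^sup>2" 1 "real t"] by simp
  then have "3 / (real q)\<^sup>2 \<le> pi\<^sup>2 * real t / (real q)\<^sup>2"
    by (intro divide_right_mono) auto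
  then have close: "\<bar>\<rho> t - (1 - z)\<bar> \<le> 2 * pi\<^sup>2 * real t / (real q)\<^sup>2"
    using abs_rho_minus_linear_le[OF assms(1,2)] abs_eps_cot_minus_le[OF assms(1,2)]
    unfolding z_def abs_le_iff by linarith
  have "pi\<^sup>2 * (2 * real t) \<le> 16 * real q"
    using pi_sq M_bounds assms by (intro mult_mono) auto
  then have "2 * pi\<^sup>2 * real t / (real q)\<^sup>2 \<le> 16 * real q / (real q)\<^sup>2"
    by (intro divide_right_mono) auto
  also have "\<dots> \<le> 1 / 4"
    using q_ge_100 q_pos by (simp add: power2_eq_square field_simps)
  finally have "1 / 4 \<le> \<rho> t" "1 / 4 \<le> 1 - z"
    using close z unfolding abs_le_iff by linarith+
  then have "\<bar>ln (\<rho> t) - ln (1 - z)\<bar> \<le> 8 * pi\<^sup>2 * real t / (real q)\<^sup>2"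
    using abs_ln_diff_le[of "1 / 4" "\<rho> t" "1 - z"] close by simp
  moreover have "\<bar>ln (1 - z) + (\<Sum>j = 1..N. z ^ j / real j)\<bar> \<le> 1 / 2 ^ N"
    using ln_one_minus_taylor_remainder[OF z, of N] power_mono[OF z, of "N + 1"]
    by (simp add: power_divide)
  moreover have "(\<Sum>j = 1..N. z ^ j / real j) = z + (\<Sum>j = 2..N. (1 / real j) * z ^ j)"
    using assms(3) by (simp add: sum.atLeast_Suc_atMost numeral_2_eq_2)
  ultimately show ?thesis
    using abs_eps_cot_minus_le[OF assms(1,2)] unfolding z_def[symmetric] abs_le_iff
    by linarith
qed

lemma ln_rho_tail_bound:
  assumes "4 \<le> t" "t \<le> M"
  shows "\<bar>ln (\<rho> t) + \<epsilon> t * cot (\<theta> t)\<bar> \<le> 8 / (real t)\<^sup>2 + 3 / (real q)\<^sup>2"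
proof -
  have t: "1 \<le> t" "t \<le> M"
    using assms by auto
  define y where "y = \<rho> t - 1"
  have "2 * real t \<le> real q" "3 * real q \<le> real q * real q"
    using M_bounds assms q_ge_100 by (auto intro: mult_right_mono)
  then have "6 * real t \<le> (real q)\<^sup>2"
    unfolding power2_eq_square by linarith
  then have "3 / (real q)\<^sup>2 \<le> 1 / (2 * real t)"
    using assms q_pos by (simp add: field_simps)
  moreover have "1 / (2 * real t) + 3 / (2 * real t) = 2 / real t"
    by (simp add: field_simps)
  ultimately have y: "\<bar>y\<bar> \<le> 2 / real t"
    using abs_rho_minus_linear_le[OF t] abs_eps_cot_le[OF t] unfolding y_def abs_le_iff
    by linarith
  moreover have "2 / real t \<le> 1 / 2"
    using assms by simp
  ultimately have "\<bar>ln (1 + y) - y\<bar> \<le> 2 * y\<^sup>2"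
    by (intro abs_ln_one_plus_x_minus_x_bound) auto
  also have "\<dots> \<le> 2 * (2 / real t)\<^sup>2"
    using y by (metis abs_ge_zero mult_left_mono power2_abs power_mono zero_le_numeral)
  finally have log_error: "\<bar>ln (\<rho> t) - (\<rho> t - 1)\<bar> \<le> 8 / (real t)\<^sup>2"
    unfolding y_def by (simp add: power_divide)
  have "ln (\<rho> t) + \<epsilon> t * cot (\<theta> t)
      = (ln (\<rho> t) - (\<rho> t - 1)) + (\<rho> t - (1 - \<epsilon> t * cot (\<theta> t)))"
    by simp
  then have "\<bar>ln (\<rho> t) + \<epsilon> t * cot (\<theta> t)\<bar>
      \<le> \<bar>ln (\<rho> t) - (\<rho> t - 1)\<bar> + \<bar>\<rho> t - (1 - \<epsilon> t * cot (\<theta> t))\<bar>"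
    by (metis abs_triangle_ineq)
  then show ?thesis
    using log_error abs_rho_minus_linear_le[OF t] by linarith
qed

lemma sum_ln_rho_tail_bound:
  assumes "3 \<le> \<tau>"
  shows "\<bar>\<Sum>t = \<tau> + 1..M. ln (\<rho> t) + \<epsilon> t * cot (\<theta> t)\<bar> \<le> 8 / real \<tau> + 3 / real q"
proof -
  have "\<bar>\<Sum>t = \<tau> + 1..M. ln (\<rho> t) + \<epsilon> t * cot (\<theta> t)\<bar>
      \<le> (\<Sum>t = \<tau> + 1..M. 8 * (1 / (real t)\<^sup>2) + 3 / (real q)\<^sup>2)"
    by (rule order.trans[OF sum_abs sum_mono]) (use ln_rho_tail_bound assms in auto)
  also have "\<dots> = 8 * (\<Sum>t = \<tau> + 1..M. 1 / (real t)\<^sup>2) + real (M - \<tau>) * (3 / (real q)\<^sup>2)"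
    by (simp add: sum.distrib sum_distrib_left)
  also have "\<dots> \<le> 8 * (1 / real \<tau>) + real q * (3 / (real q)\<^sup>2)"
    using sum_inverse_squares_tail_le[of \<tau> M] assms M_bounds
    by (intro add_mono mult_left_mono mult_right_mono) auto
  also have "\<dots> = 8 / real \<tau> + 3 / real q"
    by (simp add: power2_eq_square)
  finally show ?thesis .
qed

lemma sum_ln_rho_approx:
  assumes "3 \<le> \<tau>" "\<tau> \<le> M"
  shows "\<bar>(\<Sum>t = 1..M. ln (\<rho> t) + \<epsilon> t * cot (\<theta> t))
      + (\<Sum>t = 1..\<tau>. \<Sum>j = 2..\<tau>. (1 / real j) * (c * \<xi> t / real t) ^ j)\<bar>
    \<le> 9 * pi\<^sup>2 * (real \<tau>)\<^sup>2 / (real q)\<^sup>2 + real \<tau> / 2 ^ \<tau> + 8 / real \<tau> + 3 / real q"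
proof -
  define E where "E t = ln (\<rho> t) + \<epsilon> t * cot (\<theta> t)" for t
  define F where "F t = (\<Sum>j = 2..\<tau>. (1 / real j) * (c * \<xi> t / real t) ^ j)" for t
  have "{1..M} = {1..\<tau>} \<union> {\<tau> + 1..M}"
    using assms by auto
  then have "(\<Sum>t = 1..M. E t) = (\<Sum>t = 1..\<tau>. E t) + (\<Sum>t = \<tau> + 1..M. E t)"
    by (simp add: sum.union_disjoint)
  then have split: "(\<Sum>t = 1..M. E t) + (\<Sum>t = 1..\<tau>. F t) = (\<Sum>t = 1..\<tau>. E t + F t) + (\<Sum>t = \<tau> + 1..M. E t)"
    by (simp add: sum.distrib)
  have "\<bar>\<Sum>t = 1..\<tau>. E t + F t\<bar> \<le> (\<Sum>t = 1..\<tau>. 9 * pi\<^sup>2 * real \<tau> / (real q)\<^sup>2 + 1 / 2 ^ \<tau>)"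
  proof (rule order.trans[OF sum_abs sum_mono])
    fix t assume t: "t \<in> {1..\<tau>}"
    then have "\<bar>E t + F t\<bar> \<le> 9 * pi\<^sup>2 * real t / (real q)\<^sup>2 + 1 / 2 ^ \<tau>"
      unfolding E_def F_def using ln_rho_expansion[of t \<tau>] assms by (simp add: add.assoc)
    also have "\<dots> \<le> 9 * pi\<^sup>2 * real \<tau> / (real q)\<^sup>2 + 1 / 2 ^ \<tau>"
      using t by (simp add: divide_right_mono)
    finally show "\<bar>E t + F t\<bar> \<le> 9 * pi\<^sup>2 * real \<tau> / (real q)\<^sup>2 + 1 / 2 ^ \<tau>" .
  qed
  also have "\<dots> = 9 * pi\<^sup>2 * (real \<tau>)\<^sup>2 / (real q)\<^sup>2 + real \<tau> / 2 ^ \<tau>"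
    by (simp add: power2_eq_square algebra_simps)
  finally have head: "\<bar>\<Sum>t = 1..\<tau>. E t + F t\<bar> \<le> 9 * pi\<^sup>2 * (real \<tau>)\<^sup>2 / (real q)\<^sup>2 + real \<tau> / 2 ^ \<tau>" .
  have "\<bar>(\<Sum>t = 1..M. E t) + (\<Sum>t = 1..\<tau>. F t)\<bar> \<le> \<bar>\<Sum>t = 1..\<tau>. E t + F t\<bar> + \<bar>\<Sum>t = \<tau> + 1..M. E t\<bar>"
    unfolding split by (rule abs_triangle_ineq)
  also have "\<dots> \<le> (9 * pi\<^sup>2 * (real \<tau>)\<^sup>2 / (real q)\<^sup>2 + real \<tau> / 2 ^ \<tau>) + (8 / real \<tau> + 3 / real q)"
    using sum_ln_rho_tail_bound[OF assms(1)] unfolding E_def[symmetric] by (rule add_mono[OF head])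
  finally show ?thesis
    unfolding E_def F_def by (simp add: add.assoc)
qed

lemma cot_theta_diff:
  assumes "1 \<le> t" "t + 1 \<le> M"
  shows "cot (\<theta> t) - cot (\<theta> (t + 1)) = sin (pi / real q) / (sin (\<theta> t) * sin (\<theta> (t + 1)))"
proof -
  have "\<theta> (t + 1) - \<theta> t = pi / real q"
    unfolding \<theta>_def by (simp add: add_divide_distrib distrib_left)
  then have "sin (pi / real q) = sin (\<theta> (t + 1)) * cos (\<theta> t) - cos (\<theta> (t + 1)) * sin (\<theta> t)"
    by (metis sin_diff)
  then show ?thesis
    using sin_theta_ge(2)[of t] sin_theta_ge(2)[of "t + 1"] assms
    by (simp add: cot_def field_simps)
qed

lemma cot_theta_M_bounds: "0 \<le> cot (\<theta> M)" "cot (\<theta> M) \<le> 8 / real q"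
proof -
  have M: "1 \<le> M"
    using M_bounds by simp
  note theta = theta_bounds[OF M order_refl]
  show "0 \<le> cot (\<theta> M)"
    unfolding cot_def using theta by (intro divide_nonneg_nonneg cos_ge_zero sin_ge_zero) auto
  have "real q - 2 \<le> 2 * real M"
    using M_bounds by linarith
  then have "pi * (real q - 2) / (2 * real q) \<le> pi * (2 * real M) / (2 * real q)"
    using q_pos by (intro divide_right_mono mult_left_mono) auto
  moreover have "pi * (real q - 2) / (2 * real q) = pi / 2 - pi / real q"
    using q_pos by (simp add: field_simps)
  ultimately have "pi / 2 - \<theta> M \<le> pi / real q"
    unfolding \<theta>_def by simp
  have "cos (\<theta> M) = sin (pi / 2 - \<theta> M)"
    by (simp add: sin_cos_eq)
  also have "\<dots> \<le> pi / 2 - \<theta> M"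
    using theta by (intro sin_x_le_x) auto
  finally have "cos (\<theta> M) \<le> pi / real q"
    using \<open>pi / 2 - \<theta> M \<le> pi / real q\<close> by linarith
  moreover have "pi / 8 \<le> sin (\<theta> M)"
  proof -
    have "3 * real q \<le> 8 * real M"
      using M_bounds q_ge_100 by linarith
    then have "3 / 8 \<le> real M / real q"
      using q_pos by (simp add: field_simps)
    then have "pi * (3 / 8) \<le> \<theta> M"
      unfolding \<theta>_def using mult_left_mono[of "3 / 8" "real M / real q" pi] by simp
    then show ?thesis
      using sin_ge_third[of "\<theta> M"] theta by simp
  qed
  ultimately have "cot (\<theta> M) \<le> (pi / real q) / (pi / 8)"
    unfolding cot_def using theta cos_ge_zero[of "\<theta> M"] by (intro frac_le) auto
  then show "cot (\<theta> M) \<le> 8 / real q"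
    by simp
qed

lemma sum_xi_cot_by_parts:
  "(\<Sum>t = 1..M. \<xi> t * cot (\<theta> t))
    = (\<Sum>s = 1..M. \<xi> s) * cot (\<theta> M)
      + sin (pi / real q) * (\<Sum>t = 1..M - 1. (\<Sum>s = 1..t. \<xi> s) / (sin (\<theta> t) * sin (\<theta> (t + 1))))"
proof -
  have "(\<Sum>t = 1..M - 1. (\<Sum>s = 1..t. \<xi> s) * (cot (\<theta> t) - cot (\<theta> (t + 1))))
      = (\<Sum>t = 1..M - 1. sin (pi / real q) * ((\<Sum>s = 1..t. \<xi> s) / (sin (\<theta> t) * sin (\<theta> (t + 1)))))"
    by (rule sum.cong) (use cot_theta_diff M_bounds in auto)
  then show ?thesis
    unfolding sum_by_parts[of \<xi>] sum_distrib_left by simp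
qed

lemma abs_sum_xi_cot_le: "\<bar>\<Sum>t = 1..M. \<xi> t * cot (\<theta> t)\<bar> \<le> (real q)\<^sup>2"
proof -
  have bound: "\<bar>\<xi> t * cot (\<theta> t)\<bar> \<le> real q" if "t \<in> {1..M}" for t
  proof -
    have "\<bar>\<xi> t * cot (\<theta> t)\<bar> \<le> (1 / 2) * (3 * real q / (pi * real t))"
      unfolding abs_mult using abs_xi_le abs_cot_theta_le that by (intro mult_mono) auto
    also have "\<dots> \<le> (1 / 2) * (3 * real q / (2 * 1))"
      using that q_pos pi_ge_two by (intro mult_left_mono divide_left_mono mult_mono) auto
    finally show ?thesis
      by simp
  qed
  have "\<bar>\<Sum>t = 1..M. \<xi> t * cot (\<theta> t)\<bar> \<le> (\<Sum>t = 1..M. \<bar>\<xi> t * cot (\<theta> t)\<bar>)"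
    by (rule sum_abs)
  also have "\<dots> \<le> (\<Sum>t = 1..M. real q)"
    by (rule sum_mono) (rule bound)
  also have "\<dots> = real M * real q"
    by simp
  also have "\<dots> \<le> (real q)\<^sup>2"
    using M_bounds by (simp add: power2_eq_square mult_right_mono)
  finally show ?thesis .
qed

lemma abs_sum_xi_le: "\<bar>\<Sum>s = 1..M. \<xi> s\<bar> \<le> real q / 2"
proof -
  have "\<bar>\<Sum>s = 1..M. \<xi> s\<bar> \<le> (\<Sum>s = 1..M. \<bar>\<xi> s\<bar>)"
    by (rule sum_abs)
  also have "\<dots> \<le> (\<Sum>s = 1..M. 1 / 2)"
    by (rule sum_mono) (rule abs_xi_le)
  also have "\<dots> \<le> real q / 2"
    using M_bounds by simp
  finally show ?thesis .
qed

definition main_term :: real where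
  "main_term = - 2 * pi\<^sup>2 * c / (real q)\<^sup>2
    * (\<Sum>t = 1..M - 1. (\<Sum>s = 1..t. \<xi> s) / (sin (\<theta> t) * sin (\<theta> (t + 1))))"

text \<open>Summation by parts turns the linear terms \<open>\<epsilon> t cot (\<theta> t)\<close> into the partial sums of \<open>\<xi>\<close>;
  the factor \<open>(pi / q) / sin (pi / q) = 1 + O(q\<^sup>-\<^sup>2)\<close> and the boundary term are \<open>O(1 / q)\<close>.\<close>
lemma main_term_approx: "\<bar>main_term + 2 * (\<Sum>t = 1..M. \<epsilon> t * cot (\<theta> t))\<bar> \<le> 160 / real q"
proof -
  define a where "a = pi / real q"
  define b where "b = a / sin a"
  define K where "K = pi * c / real q"
  define S where "S = (\<Sum>t = 1..M. \<xi> t * cot (\<theta> t))"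
  define D where "D = (\<Sum>s = 1..M. \<xi> s)"
  have a: "0 < a" "a \<le> pi / 2"
    unfolding a_def using q_ge_100 by (auto simp: field_simps)
  then have "0 < sin a"
    using sin_gt_zero[of a] by simp
  have "(\<Sum>t = 1..M - 1. (\<Sum>s = 1..t. \<xi> s) / (sin (\<theta> t) * sin (\<theta> (t + 1))))
      = (S - D * cot (\<theta> M)) / sin a"
    using sum_xi_cot_by_parts \<open>0 < sin a\<close> unfolding S_def D_def a_def by (simp add: field_simps)
  then have "main_term = - 2 * K * b * (S - D * cot (\<theta> M))"
    unfolding main_term_def K_def b_def a_def using q_pos by (simp add: field_simps power2_eq_square)
  moreover have "(\<Sum>t = 1..M. \<epsilon> t * cot (\<theta> t)) = K * S"
    unfolding S_def K_def \<epsilon>_def sum_distrib_left by (simp add: field_simps)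
  ultimately have key: "main_term + 2 * (\<Sum>t = 1..M. \<epsilon> t * cot (\<theta> t))
      = - 2 * K * ((b - 1) * S - b * (D * cot (\<theta> M)))"
    by (simp add: algebra_simps)
  have "\<bar>(b - 1) * S\<bar> \<le> a\<^sup>2 / 2 * (real q)\<^sup>2"
    unfolding abs_mult b_def S_def using inverse_sinc_bounds(1)[OF a] abs_sum_xi_cot_le
    by (intro mult_mono) auto
  also have "\<dots> \<le> 8"
    unfolding a_def using q_pos pi_less_4 power_mono[of pi 4 2] by (simp add: power_divide)
  finally have "\<bar>(b - 1) * S\<bar> \<le> 8" .
  moreover have "\<bar>b * (D * cot (\<theta> M))\<bar> \<le> 3 * ((real q / 2) * (8 / real q))"
    unfolding abs_mult b_def D_def
    using inverse_sinc_bounds(2)[OF a] a \<open>0 < sin a\<close> abs_sum_xi_le cot_theta_M_bounds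
    by (intro mult_mono) auto
  ultimately have "\<bar>(b - 1) * S - b * (D * cot (\<theta> M))\<bar> \<le> 8 + 12"
    using q_pos abs_triangle_ineq4[of "(b - 1) * S" "b * (D * cot (\<theta> M))"] by simp
  moreover have "0 < K"
    unfolding K_def using c_pos q_pos by simp
  ultimately have "\<bar>main_term + 2 * (\<Sum>t = 1..M. \<epsilon> t * cot (\<theta> t))\<bar> \<le> 2 * K * 20"
    unfolding key by (simp add: abs_mult)
  also have "\<dots> \<le> 160 / real q"
    using pi_less_4 c_less_1 c_pos q_pos mult_strict_mono[of pi 4 c 1] unfolding K_def by (simp add: field_simps)
  finally show ?thesis .
qed

lemma rho_reflect: "0 < t \<Longrightarrow> t < q \<Longrightarrow> \<rho> (q - t) = \<rho> t"
  unfolding \<rho>_def by (simp add: theta_phi_reflect)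

lemma rho_mid: "even q \<Longrightarrow> \<rho> (q div 2) = 1"
  unfolding \<rho>_def by (simp add: theta_phi_mid)

lemma rho_pos:
  assumes "1 \<le> t" "t \<le> M"
  shows "0 < \<rho> t"
proof -
  have "0 < pi * real t / (2 * real q)"
    using assms q_pos by simp
  then have "0 < sin (\<phi> t)"
    using phi_bounds[OF assms] by (intro sin_gt_zero) auto
  then show ?thesis
    unfolding \<rho>_def using sin_theta_ge(2)[OF assms] by simp
qed

lemma ln_abs_prod_rho: "ln \<bar>\<Prod>t = 1..q - 1. \<rho> t\<bar> = 2 * (\<Sum>t = 1..M. ln (\<rho> t))"
proof -
  have "(\<Prod>t = 1..q - 1. \<rho> t) = (\<Prod>t = 1..M. \<rho> t)\<^sup>2 * (if even q then \<rho> (q div 2) else 1)"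
    unfolding M_def by (rule prod_symmetric_split) (use q_ge_100 rho_reflect in auto)
  then have "(\<Prod>t = 1..q - 1. \<rho> t) = (\<Prod>t = 1..M. \<rho> t)\<^sup>2"
    by (simp add: rho_mid)
  moreover have "0 < (\<Prod>t = 1..M. \<rho> t)"
    using rho_pos by (intro prod_pos) auto
  moreover have "ln (\<Prod>t = 1..M. \<rho> t) = (\<Sum>t = 1..M. ln (\<rho> t))"
    by (rule ln_prod) (use rho_pos in force)+
  ultimately show ?thesis
    by (simp add: ln_realpow)
qed

lemma ln_prod_rho_approx:
  assumes "3 \<le> \<tau>" "\<tau> \<le> M"
  shows "\<bar>ln \<bar>\<Prod>t = 1..q - 1. \<rho> t\<bar>
      - (main_term - 2 * (\<Sum>t = 1..\<tau>. \<Sum>j = 2..\<tau>. (1 / real j) * (c * \<xi> t / real t) ^ j))\<bar>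
    \<le> 18 * pi\<^sup>2 * (real \<tau>)\<^sup>2 / (real q)\<^sup>2 + 20 / real \<tau> + 166 / real q"
proof -
  define T where "T = (\<Sum>t = 1..\<tau>. \<Sum>j = 2..\<tau>. (1 / real j) * (c * \<xi> t / real t) ^ j)"
  define L where "L = (\<Sum>t = 1..M. \<epsilon> t * cot (\<theta> t))"
  have eq: "ln \<bar>\<Prod>t = 1..q - 1. \<rho> t\<bar> - (main_term - 2 * T)
      = 2 * ((\<Sum>t = 1..M. ln (\<rho> t) + \<epsilon> t * cot (\<theta> t)) + T) - (main_term + 2 * L)"
    unfolding ln_abs_prod_rho L_def by (simp add: sum.distrib algebra_simps)
  have "\<bar>2 * ((\<Sum>t = 1..M. ln (\<rho> t) + \<epsilon> t * cot (\<theta> t)) + T) - (main_term + 2 * L)\<bar>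
      \<le> 2 * \<bar>(\<Sum>t = 1..M. ln (\<rho> t) + \<epsilon> t * cot (\<theta> t)) + T\<bar> + \<bar>main_term + 2 * L\<bar>"
    using abs_triangle_ineq4[of "2 * x" y for x y :: real]
    by (rule order_trans) (simp only: abs_mult abs_numeral order_refl)
  also have "\<dots> \<le> 2 * (9 * pi\<^sup>2 * (real \<tau>)\<^sup>2 / (real q)\<^sup>2 + real \<tau> / 2 ^ \<tau> + 8 / real \<tau> + 3 / real q)
      + 160 / real q"
    using sum_ln_rho_approx[OF assms] main_term_approx unfolding T_def L_def
    by (intro add_mono mult_left_mono) simp_all
  also have "\<dots> \<le> 18 * pi\<^sup>2 * (real \<tau>)\<^sup>2 / (real q)\<^sup>2 + 20 / real \<tau> + 166 / real q"
  proof -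
    have "2 * (real \<tau> / 2 ^ \<tau>) \<le> 4 / real \<tau>"
      using self_div_power2_le[of \<tau>] by simp
    moreover have "20 / real \<tau> = 4 / real \<tau> + 16 / real \<tau>" "166 / real q = 6 / real q + 160 / real q"
      by simp_all
    ultimately show ?thesis
      by simp
  qed
  finally show ?thesis
    unfolding T_def[symmetric] eq .
qed

lemma phi_0_eq: "\<phi> 0 = pi * c / (2 * real q)"
  unfolding \<phi>_def \<theta>_def \<epsilon>_def \<xi>_def by simp

lemma phi_0_sq_le: "(\<phi> 0)\<^sup>2 \<le> 4 / (real q)\<^sup>2"
proof -
  have "\<phi> 0 \<le> pi / (2 * real q)"
    unfolding phi_0_eq using c_pos c_less_1 q_pos by (intro divide_right_mono) (auto simp: mult_left_le)
  then have "(\<phi> 0)\<^sup>2 \<le> (pi / (2 * real q))\<^sup>2"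
    using c_pos q_pos by (intro power_mono) (auto simp: phi_0_eq)
  also have "\<dots> = pi\<^sup>2 / (4 * (real q)\<^sup>2)"
    by (simp add: power_divide power_mult_distrib)
  also have "\<dots> \<le> 16 / (4 * (real q)\<^sup>2)"
    using pi_less_4 power_mono[of pi 4 2] by (intro divide_right_mono) auto
  finally show ?thesis
    by simp
qed

lemma phi_0_le_phi:
  assumes "1 \<le> t" "t \<le> M"
  shows "0 < \<phi> 0" "\<phi> 0 * real t \<le> \<phi> t" "\<phi> 0 \<le> \<phi> t" "\<phi> t \<le> pi / 2"
proof -
  show "0 < \<phi> 0"
    unfolding phi_0_eq using c_pos q_pos by simp
  have "\<phi> 0 * real t = (pi * real t / (2 * real q)) * c"
    unfolding phi_0_eq by simp
  also have "\<dots> \<le> pi * real t / (2 * real q)"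
    using c_less_1 q_pos by (intro mult_left_le) auto
  finally show "\<phi> 0 * real t \<le> \<phi> t"
    using phi_bounds(1)[OF assms] by linarith
  moreover have "\<phi> 0 \<le> \<phi> 0 * real t"
    using \<open>0 < \<phi> 0\<close> assms by simp
  ultimately show "\<phi> 0 \<le> \<phi> t"
    by linarith
  show "\<phi> t \<le> pi / 2"
    using phi_bounds(2)[OF assms] .
qed

definition C_factor :: "nat \<Rightarrow> real" where
  "C_factor t = 1 - (sin (\<phi> 0))\<^sup>2 / (sin (\<phi> t))\<^sup>2"

lemma C_factor_bounds:
  assumes "1 \<le> t" "t \<le> M"
  shows "0 \<le> C_factor t" "C_factor t \<le> 1" "1 - C_factor t \<le> 9 / (real t)\<^sup>2"
proof -
  note d = phi_0_le_phi[OF assms]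
  note ratio = sin_sq_ratio_le[OF d(1,3,4)]
  show "0 \<le> C_factor t" "C_factor t \<le> 1"
    unfolding C_factor_def using ratio(2) by auto
  have "\<phi> 0 / \<phi> t \<le> 1 / real t"
    using d assms by (simp add: field_simps)
  then have "(\<phi> 0 / \<phi> t)\<^sup>2 \<le> (1 / real t)\<^sup>2"
    using d by (intro power_mono) auto
  then have "9 * (\<phi> 0)\<^sup>2 / (\<phi> t)\<^sup>2 \<le> 9 / (real t)\<^sup>2"
    by (simp add: power_divide)
  then show "1 - C_factor t \<le> 9 / (real t)\<^sup>2"
    unfolding C_factor_def using ratio(1) by simp
qed

lemma approx_factor_eq: "1 - 1 / (4 * (real t / c - \<xi> t)\<^sup>2) = 1 - (\<phi> 0)\<^sup>2 / (\<phi> t)\<^sup>2"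
proof -
  have "real t / c - \<xi> t = \<phi> t / (2 * \<phi> 0)"
    using c_pos q_pos by (simp add: phi_eq[of t] phi_0_eq field_simps)
  then have "4 * (real t / c - \<xi> t)\<^sup>2 = (\<phi> t)\<^sup>2 / (\<phi> 0)\<^sup>2"
    by (simp add: power_divide power_mult_distrib)
  then show ?thesis
    by simp
qed

lemma
  assumes "1 \<le> t" "t \<le> M"
  shows approx_factor_bounds: "1 - (\<phi> 0)\<^sup>2 / (\<phi> t)\<^sup>2 \<in> {0..1}"
    and C_factor_approx: "\<bar>C_factor t - (1 - (\<phi> 0)\<^sup>2 / (\<phi> t)\<^sup>2)\<bar> \<le> 12 / (real q)\<^sup>2"
proof -
  have d: "0 < \<phi> 0" "\<phi> 0 \<le> \<phi> t" "\<phi> t \<le> pi / 2"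
    using phi_0_le_phi[OF assms] by auto
  then have "(\<phi> 0)\<^sup>2 \<le> (\<phi> t)\<^sup>2"
    by (intro power_mono) auto
  then show "1 - (\<phi> 0)\<^sup>2 / (\<phi> t)\<^sup>2 \<in> {0..1}"
    using d by auto
  have "\<bar>C_factor t - (1 - (\<phi> 0)\<^sup>2 / (\<phi> t)\<^sup>2)\<bar> \<le> 3 * (\<phi> 0)\<^sup>2"
    unfolding C_factor_def using sin_sq_ratio_approx[OF d] by (simp add: abs_minus_commute)
  then show "\<bar>C_factor t - (1 - (\<phi> 0)\<^sup>2 / (\<phi> t)\<^sup>2)\<bar> \<le> 12 / (real q)\<^sup>2"
    using phi_0_sq_le by linarith
qed

lemma C_factor_reflect: "0 < t \<Longrightarrow> t < q \<Longrightarrow> C_factor (q - t) = C_factor t"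
  unfolding C_factor_def by (simp add: theta_phi_reflect)

lemma C_factor_mid:
  assumes "even q"
  shows "0 \<le> sqrt (C_factor (q div 2))" "sqrt (C_factor (q div 2)) \<le> 1"
    "1 - sqrt (C_factor (q div 2)) \<le> 4 / (real q)\<^sup>2"
proof -
  have C: "C_factor (q div 2) = 1 - (sin (\<phi> 0))\<^sup>2"
    unfolding C_factor_def theta_phi_mid[OF assms] by simp
  have "(sin (\<phi> 0))\<^sup>2 \<le> (\<phi> 0)\<^sup>2"
    using abs_sin_x_le_abs_x[of "\<phi> 0"] by (metis abs_ge_zero power2_abs power_mono)
  moreover have "(sin (\<phi> 0))\<^sup>2 \<le> 1"
    by (simp add: abs_square_le_1)
  ultimately have "0 \<le> C_factor (q div 2)" "C_factor (q div 2) \<le> 1" "1 - C_factor (q div 2) \<le> 4 / (real q)\<^sup>2"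
    unfolding C using phi_0_sq_le by auto
  moreover have "C_factor (q div 2) \<le> sqrt (C_factor (q div 2))"
    using calculation(1,2) by (intro real_le_rsqrt) (simp add: power2_eq_square mult_left_le)
  ultimately show "0 \<le> sqrt (C_factor (q div 2))" "sqrt (C_factor (q div 2)) \<le> 1"
    "1 - sqrt (C_factor (q div 2)) \<le> 4 / (real q)\<^sup>2"
    by auto
qed

lemma prod_sqrt_C_factor:
  "(\<Prod>t = 1..q - 1. sqrt (C_factor t))
    = (\<Prod>t = 1..M. C_factor t) * (if even q then sqrt (C_factor (q div 2)) else 1)"
proof -
  have "(\<Prod>t = 1..q - 1. sqrt (C_factor t))
      = (\<Prod>t = 1..M. sqrt (C_factor t))\<^sup>2 * (if even q then sqrt (C_factor (q div 2)) else 1)"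
    unfolding M_def by (rule prod_symmetric_split) (use q_ge_100 C_factor_reflect in auto)
  also have "(\<Prod>t = 1..M. sqrt (C_factor t))\<^sup>2 = (\<Prod>t = 1..M. C_factor t)"
    unfolding prod_power_distrib using C_factor_bounds by (intro prod.cong) auto
  finally show ?thesis .
qed

lemma prod_C_factor_head:
  assumes "\<kappa> \<le> M"
  shows "\<bar>(\<Prod>t = 1..\<kappa>. C_factor t) - (\<Prod>t = 1..\<kappa>. 1 - (\<phi> 0)\<^sup>2 / (\<phi> t)\<^sup>2)\<bar> \<le> 12 * real \<kappa> / (real q)\<^sup>2"
proof -
  have "\<bar>(\<Prod>t = 1..\<kappa>. C_factor t) - (\<Prod>t = 1..\<kappa>. 1 - (\<phi> 0)\<^sup>2 / (\<phi> t)\<^sup>2)\<bar>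
      \<le> (\<Sum>t = 1..\<kappa>. \<bar>C_factor t - (1 - (\<phi> 0)\<^sup>2 / (\<phi> t)\<^sup>2)\<bar>)"
    using C_factor_bounds approx_factor_bounds assms by (intro abs_prod_diff_le_sum) auto
  also have "\<dots> \<le> (\<Sum>t = 1..\<kappa>. 12 / (real q)\<^sup>2)"
    using C_factor_approx assms by (intro sum_mono) auto
  finally show ?thesis
    by (simp add: mult.commute)
qed

lemma prod_C_factor_tail:
  assumes "1 \<le> \<kappa>"
  shows "\<bar>(\<Prod>t = \<kappa> + 1..M. C_factor t) - 1\<bar> \<le> 9 / real \<kappa>"
proof -
  have "\<bar>(\<Prod>t = \<kappa> + 1..M. 1) - (\<Prod>t = \<kappa> + 1..M. C_factor t)\<bar> \<le> (\<Sum>t = \<kappa> + 1..M. \<bar>1 - C_factor t\<bar>)"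
    using C_factor_bounds assms by (intro abs_prod_diff_le_sum) auto
  also have "\<dots> \<le> (\<Sum>t = \<kappa> + 1..M. 9 * (1 / (real t)\<^sup>2))"
    using C_factor_bounds assms by (intro sum_mono) auto
  also have "\<dots> \<le> 9 * (1 / real \<kappa>)"
    unfolding sum_distrib_left[symmetric] using sum_inverse_squares_tail_le[OF assms, of M]
    by (intro mult_left_mono) auto
  finally show ?thesis
    by (simp add: abs_minus_commute)
qed

lemma prod_C_factor_approx:
  assumes "1 \<le> \<kappa>" "\<kappa> \<le> M"
  shows "\<bar>(\<Prod>t = 1..q - 1. sqrt (C_factor t)) - (\<Prod>t = 1..\<kappa>. 1 - 1 / (4 * (real t / c - \<xi> t)\<^sup>2))\<bar>
    \<le> 16 * (real \<kappa>)\<^sup>2 / (real q)\<^sup>2 + 9 / real \<kappa>"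
proof -
  define m where "m = (if even q then sqrt (C_factor (q div 2)) else 1)"
  define P1 where "P1 = (\<Prod>t = 1..\<kappa>. C_factor t)"
  define P2 where "P2 = (\<Prod>t = \<kappa> + 1..M. C_factor t)"
  define G where "G = (\<Prod>t = 1..\<kappa>. 1 - (\<phi> 0)\<^sup>2 / (\<phi> t)\<^sup>2)"
  have "{1..M} = {1..\<kappa>} \<union> {\<kappa> + 1..M}"
    using assms by auto
  then have "(\<Prod>t = 1..M. C_factor t) = P1 * P2"
    unfolding P1_def P2_def by (simp add: prod.union_disjoint)
  then have C: "(\<Prod>t = 1..q - 1. sqrt (C_factor t)) = P1 * P2 * m"
    unfolding m_def prod_sqrt_C_factor by simp
  have P: "P1 \<in> {0..1}" "P2 \<in> {0..1}"
    unfolding P1_def P2_def using C_factor_bounds assms by (auto intro!: prod_nonneg prod_le_1)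
  have m: "0 \<le> m" "m \<le> 1" "1 - m \<le> 4 / (real q)\<^sup>2"
    unfolding m_def using C_factor_mid by auto
  have "P1 * P2 * m - G = P1 * P2 * (m - 1) + P1 * (P2 - 1) + (P1 - G)"
    by (simp add: algebra_simps)
  moreover have "\<bar>P1 * P2 * (m - 1) + P1 * (P2 - 1) + (P1 - G)\<bar>
      \<le> \<bar>P1 * P2 * (m - 1)\<bar> + \<bar>P1 * (P2 - 1)\<bar> + \<bar>P1 - G\<bar>"
    by linarith
  ultimately have "\<bar>P1 * P2 * m - G\<bar> \<le> \<bar>P1 * P2\<bar> * \<bar>m - 1\<bar> + \<bar>P1\<bar> * \<bar>P2 - 1\<bar> + \<bar>P1 - G\<bar>"
    by (simp only: abs_mult)
  also have "\<dots> \<le> 1 * (4 / (real q)\<^sup>2) + 1 * (9 / real \<kappa>) + 12 * real \<kappa> / (real q)\<^sup>2"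
    using P m prod_C_factor_head[OF assms(2)] prod_C_factor_tail[OF assms(1)]
    unfolding P1_def[symmetric] P2_def[symmetric] G_def[symmetric]
    by (intro add_mono mult_mono) (auto simp: abs_minus_commute mult_le_one)
  also have "\<dots> \<le> 16 * (real \<kappa>)\<^sup>2 / (real q)\<^sup>2 + 9 / real \<kappa>"
  proof -
    have "real \<kappa> \<le> real \<kappa> * real \<kappa>"
      using assms by simp
    then have "12 * real \<kappa> + 4 \<le> 16 * (real \<kappa>)\<^sup>2"
      using assms unfolding power2_eq_square by linarith
    then have "(12 * real \<kappa> + 4) / (real q)\<^sup>2 \<le> 16 * (real \<kappa>)\<^sup>2 / (real q)\<^sup>2"
      by (intro divide_right_mono) auto
    then show ?thesis
      by (simp add: add_divide_distrib)
  qed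
  finally show ?thesis
    unfolding C G_def approx_factor_eq .
qed

end

section \<open>Asymptotics\<close>

lemma A_n_estimate:
  assumes "0 < \<alpha>" "\<alpha> < 1" "\<alpha> \<notin> \<rat>" "0 < n"
  shows "\<bar>A_n \<alpha> n / (2 * pi * cc \<alpha> n) - 1\<bar> \<le> 3 * (Lam \<alpha> n)\<^sup>2"
proof -
  let ?\<Lambda> = "Lam \<alpha> n" and ?q = "real (cf_q \<alpha> n)"
  have q: "0 < ?q"
    using cf_q_pos[OF assms] by simp
  have c: "cc \<alpha> n = ?q * \<bar>?\<Lambda>\<bar>" "0 < cc \<alpha> n"
    using abs_Lam_eq[OF assms] cc_pos[OF assms] q by simp_all
  then have "?\<Lambda> \<noteq> 0"
    by auto
  have "A_n \<alpha> n / (2 * pi * cc \<alpha> n) = \<bar>sin (pi * ?\<Lambda>) / (pi * ?\<Lambda>)\<bar>"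
    unfolding A_n_def c(1) using q by (simp add: abs_mult abs_divide)
  then have "\<bar>A_n \<alpha> n / (2 * pi * cc \<alpha> n) - 1\<bar> \<le> \<bar>sin (pi * ?\<Lambda>) / (pi * ?\<Lambda>) - 1\<bar>"
    by (metis abs_idempotent abs_one abs_triangle_ineq3)
  also have "\<dots> \<le> (pi * ?\<Lambda>)\<^sup>2 / 6"
    using \<open>?\<Lambda> \<noteq> 0\<close> by (intro abs_sinc_minus_one_le) simp
  also have "\<dots> \<le> 3 * ?\<Lambda>\<^sup>2"
  proof -
    have "pi\<^sup>2 * ?\<Lambda>\<^sup>2 \<le> 18 * ?\<Lambda>\<^sup>2"
      using pi_less_4 power_mono[of pi 4 2] by (intro mult_right_mono) auto
    then show ?thesis
      by (simp add: power_mult_distrib)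
  qed
  finally show ?thesis .
qed

lemma convergent_level_cf:
  assumes "0 < \<alpha>" "\<alpha> < 1" "\<alpha> \<notin> \<rat>" "0 < n" "100 \<le> cf_q \<alpha> n"
  shows "convergent_level (cf_q \<alpha> n) (cf_q \<alpha> (n - 1)) (cc \<alpha> n)"
  using assms cf_q_coprime[of \<alpha> "n - 1"] cc_pos[OF assms(1-4)] cc_less_1[OF assms(1-4)]
  by unfold_locales simp_all

definition B_n_approx :: "real \<Rightarrow> nat \<Rightarrow> nat \<Rightarrow> real" where
  "B_n_approx \<alpha> n \<tau> =
    - 2 * pi\<^sup>2 * cc \<alpha> n / (real (cf_q \<alpha> n))\<^sup>2
      * (\<Sum>t = 1..M_n \<alpha> n - 1. Dsum t (alpha_minus \<alpha> n)
           / (sin (pi * real t / real (cf_q \<alpha> n)) * sin (pi * real (t + 1) / real (cf_q \<alpha> n))))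
    - 2 * (\<Sum>t = 1..\<tau>. \<Sum>j = 2..\<tau>. (1 / real j) * (cc \<alpha> n * xi \<alpha> n t / real t) ^ j)"

definition C_n_approx :: "real \<Rightarrow> nat \<Rightarrow> nat \<Rightarrow> real" where
  "C_n_approx \<alpha> n \<kappa> = (\<Prod>t = 1..\<kappa>. 1 - 1 / (4 * (real t / cc \<alpha> n - xi \<alpha> n t)\<^sup>2))"

lemma B_n_estimate:
  assumes "0 < \<alpha>" "\<alpha> < 1" "\<alpha> \<notin> \<rat>" "0 < n" "100 \<le> cf_q \<alpha> n" "3 \<le> \<tau>" "\<tau> \<le> M_n \<alpha> n"
  shows "\<bar>ln (B_n \<alpha> n) - B_n_approx \<alpha> n \<tau>\<bar>
    \<le> 18 * pi\<^sup>2 * (real \<tau>)\<^sup>2 / (real (cf_q \<alpha> n))\<^sup>2 + 20 / real \<tau> + 166 / real (cf_q \<alpha> n)"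
proof -
  interpret L: convergent_level "cf_q \<alpha> n" "cf_q \<alpha> (n - 1)" "cc \<alpha> n"
    using convergent_level_cf[OF assms(1-5)] .
  have xi: "xi \<alpha> n t = L.\<xi> t" for t
    unfolding xi_def L.\<xi>_def ..
  have "s_nt \<alpha> n t / (2 * sin (pi * real t / real (cf_q \<alpha> n))) = L.\<rho> t" for t
    unfolding s_nt_def L.\<rho>_def L.\<phi>_def L.\<theta>_def L.\<epsilon>_def xi abs_Lam_eq[OF assms(1-4)]
    by (simp add: diff_divide_distrib algebra_simps)
  then have "B_n \<alpha> n = \<bar>\<Prod>t = 1..cf_q \<alpha> n - 1. L.\<rho> t\<bar>"
    unfolding B_n_def by simp
  moreover have "B_n_approx \<alpha> n \<tau>
      = L.main_term - 2 * (\<Sum>t = 1..\<tau>. \<Sum>j = 2..\<tau>. (1 / real j) * (cc \<alpha> n * L.\<xi> t / real t) ^ j)"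
    unfolding B_n_approx_def L.main_term_def Dsum_def alpha_minus_def L.\<xi>_def L.\<theta>_def M_n_def L.M_def xi
    by (simp add: mult.commute)
  ultimately show ?thesis
    using L.ln_prod_rho_approx[of \<tau>] assms(6,7) unfolding M_n_def L.M_def by simp
qed

lemma C_n_estimate:
  assumes "0 < \<alpha>" "\<alpha> < 1" "\<alpha> \<notin> \<rat>" "0 < n" "100 \<le> cf_q \<alpha> n" "1 \<le> \<kappa>" "\<kappa> \<le> M_n \<alpha> n"
  shows "\<bar>C_n \<alpha> n - C_n_approx \<alpha> n \<kappa>\<bar> \<le> 16 * (real \<kappa>)\<^sup>2 / (real (cf_q \<alpha> n))\<^sup>2 + 9 / real \<kappa>"
proof -
  interpret L: convergent_level "cf_q \<alpha> n" "cf_q \<alpha> (n - 1)" "cc \<alpha> n"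
    using convergent_level_cf[OF assms(1-5)] .
  have xi: "xi \<alpha> n t = L.\<xi> t" for t
    unfolding xi_def L.\<xi>_def ..
  have "s_nt \<alpha> n t = 2 * sin (L.\<phi> t)" for t
    unfolding s_nt_def L.\<phi>_def L.\<theta>_def L.\<epsilon>_def xi abs_Lam_eq[OF assms(1-4)]
    by (simp add: diff_divide_distrib algebra_simps)
  then have "C_n \<alpha> n = (\<Prod>t = 1..cf_q \<alpha> n - 1. sqrt (L.C_factor t))"
    unfolding C_n_def L.C_factor_def by (simp add: power_mult_distrib)
  then show ?thesis
    using L.prod_C_factor_approx[of \<kappa>] assms(6,7)
    unfolding C_n_approx_def M_n_def L.M_def xi by simp
qed

lemma filterlim_if_strict_mono_on:
  fixes f :: "nat \<Rightarrow> nat"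
  assumes "strict_mono_on {N..} f"
  shows "filterlim f at_top sequentially"
proof -
  have "k \<le> f (N + k)" for k
  proof (induction k)
    case (Suc k)
    have "f (N + k) < f (N + Suc k)"
      by (rule strict_mono_onD[OF assms]) auto
    with Suc show ?case
      by simp
  qed simp
  then have "b \<le> f n" if "N + b \<le> n" for b n
    using \<open>\<And>k. k \<le> f (N + k)\<close>[of "n - N"] that by simp
  then show ?thesis
    unfolding filterlim_at_top eventually_at_top_linorder by blast
qed

lemma eventually_le_half:
  fixes \<tau> Q :: "nat \<Rightarrow> nat"
  assumes "(\<lambda>n. real (\<tau> n)) \<in> O(\<lambda>n. sqrt (real (Q n)))" "filterlim Q at_top sequentially"
  shows "eventually (\<lambda>n. \<tau> n \<le> (Q n - 1) div 2) sequentially"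
proof -
  obtain K where K: "0 < K" "eventually (\<lambda>n. norm (real (\<tau> n)) \<le> K * norm (sqrt (real (Q n)))) sequentially"
    using landau_o.bigE[OF assms(1)] by blast
  have "eventually (\<lambda>n. nat \<lceil>(2 * K + 2)\<^sup>2\<rceil> \<le> Q n) sequentially"
    using assms(2) unfolding filterlim_at_top by blast
  with K(2) show ?thesis
  proof eventually_elim
    case (elim n)
    define s where "s = sqrt (real (Q n))"
    have "(2 * K + 2)\<^sup>2 \<le> real (Q n)"
      using real_nat_ceiling_ge[of "(2 * K + 2)\<^sup>2"] elim(2) by linarith
    then have "2 * K + 2 \<le> s"
      unfolding s_def by (rule real_le_rsqrt)
    then have "(2 * K + 2) * s \<le> s * s"
      using K(1) by (intro mult_right_mono) auto
    moreover have "real (\<tau> n) \<le> K * s"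
      using elim(1) unfolding s_def by simp
    ultimately have "2 * real (\<tau> n) + 2 \<le> real (Q n)"
      using \<open>2 * K + 2 \<le> s\<close> K(1) unfolding s_def by (simp add: algebra_simps)
    then show ?case
      by linarith
  qed
qed

lemma error_terms_le_inverse:
  fixes t r K a b d :: real
  assumes "1 \<le> t" "1 \<le> r" "t\<^sup>2 \<le> K\<^sup>2 * r" "0 \<le> a" "0 \<le> d"
  shows "a * t\<^sup>2 / r\<^sup>2 + b / t + d / r \<le> (a * K ^ 4 + b + d * K\<^sup>2) / t"
proof -
  have "1 / r \<le> K\<^sup>2 / t\<^sup>2"
    using assms by (simp add: field_simps)
  also have "\<dots> \<le> K\<^sup>2 / t"
    using assms by (intro divide_left_mono) (auto simp: power2_eq_square)
  finally have inv_r: "1 / r \<le> K\<^sup>2 / t" .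
  have "t\<^sup>2 / r\<^sup>2 = (t\<^sup>2 / r) * (1 / r)"
    by (simp add: power2_eq_square)
  also have "\<dots> \<le> K\<^sup>2 * (K\<^sup>2 / t)"
    using assms inv_r by (intro mult_mono) (auto simp: field_simps)
  finally have "a * (t\<^sup>2 / r\<^sup>2) + b / t + d * (1 / r) \<le> a * (K\<^sup>2 * (K\<^sup>2 / t)) + b / t + d * (K\<^sup>2 / t)"
    using inv_r assms by (intro add_mono mult_left_mono) auto
  also have "\<dots> = (a * K ^ 4 + b + d * K\<^sup>2) / t"
    using assms by (simp add: field_simps power2_eq_square power4_eq_xxxx)
  finally show ?thesis
    by simp
qed

lemma bigo_inverse_if_error_bound:
  fixes f :: "nat \<Rightarrow> real" and \<tau> Q :: "nat \<Rightarrow> nat"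
  assumes "(\<lambda>n. real (\<tau> n)) \<in> O(\<lambda>n. sqrt (real (Q n)))"
    and "eventually (\<lambda>n. 1 \<le> \<tau> n \<and> 1 \<le> Q n \<and>
      \<bar>f n\<bar> \<le> a * (real (\<tau> n))\<^sup>2 / (real (Q n))\<^sup>2 + b / real (\<tau> n) + d / real (Q n)) sequentially"
    and "0 \<le> a" "0 \<le> d"
  shows "f \<in> O(\<lambda>n. 1 / real (\<tau> n))"
proof -
  obtain K where K: "0 < K" "eventually (\<lambda>n. norm (real (\<tau> n)) \<le> K * norm (sqrt (real (Q n)))) sequentially"
    using landau_o.bigE[OF assms(1)] by blast
  show ?thesis
  proof (rule bigoI)
    show "eventually (\<lambda>n. norm (f n) \<le> (a * K ^ 4 + b + d * K\<^sup>2) * norm (1 / real (\<tau> n))) sequentially"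
      using assms(2) K(2)
    proof eventually_elim
      case (elim n)
      then have "(real (\<tau> n))\<^sup>2 \<le> (K * sqrt (real (Q n)))\<^sup>2"
        by (intro power_mono) auto
      then have "(real (\<tau> n))\<^sup>2 \<le> K\<^sup>2 * real (Q n)"
        by (simp add: power_mult_distrib)
      then show ?case
        using elim error_terms_le_inverse[of "real (\<tau> n)" "real (Q n)" K a d b] assms(3,4)
        by simp
    qed
  qed
qed

lemma A_n_asymptotics:
  assumes "0 < \<alpha>" "\<alpha> < 1" "\<alpha> \<notin> \<rat>"
  shows "(\<lambda>n. A_n \<alpha> n / (2 * pi * cc \<alpha> n) - 1) \<in> O(\<lambda>n. (Lam \<alpha> n)\<^sup>2)"
  by (rule bigoI[where c = 3], use eventually_gt_at_top[of 0] in eventually_elim)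
    (simp add: A_n_estimate[OF assms])

lemma B_n_asymptotics:
  assumes "0 < \<alpha>" "\<alpha> < 1" "\<alpha> \<notin> \<rat>" "filterlim \<tau> at_top sequentially"
    and "(\<lambda>n. real (\<tau> n)) \<in> O(\<lambda>n. sqrt (real (cf_q \<alpha> n)))"
  shows "(\<lambda>n. ln (B_n \<alpha> n) - B_n_approx \<alpha> n (\<tau> n)) \<in> O(\<lambda>n. 1 / real (\<tau> n))"
proof (rule bigo_inverse_if_error_bound[OF assms(5)])
  have q: "filterlim (cf_q \<alpha>) at_top sequentially"
    using filterlim_cf_q[OF assms(1-3)] .
  show "eventually (\<lambda>n. 1 \<le> \<tau> n \<and> 1 \<le> cf_q \<alpha> n \<and> \<bar>ln (B_n \<alpha> n) - B_n_approx \<alpha> n (\<tau> n)\<bar>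
      \<le> 18 * pi\<^sup>2 * (real (\<tau> n))\<^sup>2 / (real (cf_q \<alpha> n))\<^sup>2 + 20 / real (\<tau> n) + 166 / real (cf_q \<alpha> n)) sequentially"
    using eventually_gt_at_top[of 0] eventually_le_half[OF assms(5) q]
      filterlim_at_top[THEN iffD1, OF q, rule_format, of 100]
      filterlim_at_top[THEN iffD1, OF assms(4), rule_format, of 3]
    by eventually_elim (auto intro!: B_n_estimate[OF assms(1-3)] simp: M_n_def)
qed auto

lemma C_n_asymptotics:
  assumes "0 < \<alpha>" "\<alpha> < 1" "\<alpha> \<notin> \<rat>" "filterlim \<kappa> at_top sequentially"
    and "(\<lambda>n. real (\<kappa> n)) \<in> O(\<lambda>n. sqrt (real (cf_q \<alpha> n)))"
  shows "(\<lambda>n. C_n \<alpha> n - C_n_approx \<alpha> n (\<kappa> n)) \<in> O(\<lambda>n. 1 / real (\<kappa> n))"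
proof (rule bigo_inverse_if_error_bound[where d = 0, OF assms(5)])
  have q: "filterlim (cf_q \<alpha>) at_top sequentially"
    using filterlim_cf_q[OF assms(1-3)] .
  show "eventually (\<lambda>n. 1 \<le> \<kappa> n \<and> 1 \<le> cf_q \<alpha> n \<and> \<bar>C_n \<alpha> n - C_n_approx \<alpha> n (\<kappa> n)\<bar>
      \<le> 16 * (real (\<kappa> n))\<^sup>2 / (real (cf_q \<alpha> n))\<^sup>2 + 9 / real (\<kappa> n) + 0 / real (cf_q \<alpha> n)) sequentially"
    using eventually_gt_at_top[of 0] eventually_le_half[OF assms(5) q]
      filterlim_at_top[THEN iffD1, OF q, rule_format, of 100]
      filterlim_at_top[THEN iffD1, OF assms(4), rule_format, of 1]
    by eventually_elim (auto intro!: C_n_estimate[OF assms(1-3)] simp: M_n_def)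
qed auto

theorem lemma3p2:
  fixes \<alpha> :: real and \<tau> \<kappa> :: "nat \<Rightarrow> nat"
  assumes "0 < \<alpha>" "\<alpha> < 1" "\<alpha> \<notin> \<rat>"
    and "\<exists>N. strict_mono_on {N..} \<tau>" "\<exists>N. strict_mono_on {N..} \<kappa>"
    and "(\<lambda>n. real (\<tau> n)) \<in> O(\<lambda>n. sqrt (real (cf_q \<alpha> n)))"
    and "(\<lambda>n. real (\<kappa> n)) \<in> O(\<lambda>n. sqrt (real (cf_q \<alpha> n)))"
  shows "((\<lambda>n. A_n \<alpha> n / (2 * pi * cc \<alpha> n) - 1) \<in> O(\<lambda>n. (Lam \<alpha> n)\<^sup>2))
    \<and> ((\<lambda>n. ln (B_n \<alpha> n)
           - (- 2 * pi\<^sup>2 * cc \<alpha> n / (real (cf_q \<alpha> n))\<^sup>2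
                * (\<Sum>t = 1..M_n \<alpha> n - 1. Dsum t (alpha_minus \<alpha> n)
                     / (sin (pi * real t / real (cf_q \<alpha> n))
                        * sin (pi * real (t + 1) / real (cf_q \<alpha> n))))
              - 2 * (\<Sum>t = 1..\<tau> n. \<Sum>j = 2..\<tau> n.
                       (1 / real j) * (cc \<alpha> n * xi \<alpha> n t / real t) ^ j)))
         \<in> O(\<lambda>n. 1 / real (\<tau> n)))
    \<and> ((\<lambda>n. C_n \<alpha> n
           - (\<Prod>t = 1..\<kappa> n. 1 - 1 / (4 * (real t / cc \<alpha> n - xi \<alpha> n t)\<^sup>2)))
         \<in> O(\<lambda>n. 1 / real (\<kappa> n)))"
proof -
  have "filterlim \<tau> at_top sequentially" "filterlim \<kappa> at_top sequentially"
    using assms(4,5) filterlim_if_strict_mono_on by blast+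
  then show ?thesis
    using A_n_asymptotics[OF assms(1-3)]
      B_n_asymptotics[OF assms(1-3) _ assms(6)] C_n_asymptotics[OF assms(1-3) _ assms(7)]
    unfolding B_n_approx_def C_n_approx_def by blast
qed

end
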